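(* In the polar Brauer category $\mathcal{AB}(\delta)$ over a commutative ring $K$ with $\delta\in K$: (1) If the characteristic of $K$ is not two, then $Z_1=0$ and $2Z_3=(2-\delta)Z_2$. (2) $Z_2\otimes I$ and $\mathbb H$ commute in $\mathrm{End}(1)$; consequently $(Z_2\otimes I_s)\mathbb A=\mathbb A(Z_2\otimes I_r)$ for every morphism $\mathbb A\in\mathrm{Hom}_{\mathcal{AB}(\delta)}(r,s)$.
   Context: Let $K$ be a commutative ring and $\delta\in K$. The Brauer category $\mathcal B(\delta)$ has objects $\mathbb N$; $\mathrm{Hom}_{\mathcal B(\delta)}(r,s)$ is the free $K$-module on Brauer $(r,s)$-diagrams; composition $BA$ (first $A$, then $B$) is stacking with closed loops replaced by a factor $\delta$; $\otimes$ is juxtaposition. $I$ is the identity of $1$, $I_r=I^{\otimes r}$, $X$ the crossing, $\cap:2\to0$ the cap, $\cup:0\to2$ the cup, $H=X-\cup\circ\cap$. The polar Brauer category $\mathcal{AB}(\delta)$ is the $K$-linear category with objects $\mathbb N$ generated, under composition and the right action $\mathbb D\mapsto\mathbb D\otimes B$ of morphisms $B$ of $\mathcal B(\delta)$ (juxtaposing $B$ on the right; $\mathbb D:r\to s$, $B:k\to\ell$ give $\mathbb D\otimes B:r+k\to s+\ell$), by $\mathbb I_0$ (a vertical pole, identity of $0$) and $\mathbb H:1\to1$ (pole joined by a horizontal connector to one thin strand), subject to: (i) $(\mathbb I_0\otimes B)(\mathbb I_0\otimes A)=\mathbb I_0\otimes BA$, $(\mathbb H\otimes B)(\mathbb I_1\otimes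 A)=(\mathbb I_1\otimes B)(\mathbb H\otimes A)=\mathbb H\otimes BA$, with $\mathbb I_r=\mathbb I_0\otimes I_r$; (ii) $[\mathbb H_{01},\mathbb H_{02}+\mathbb H_{12}]=0$ with $[a,b]=ab-ba$, $\mathbb H_{01}=\mathbb H\otimes I$, $\mathbb X_0=\mathbb I_0\otimes X$, $\mathbb H_{02}=\mathbb X_0\mathbb H_{01}\mathbb X_0$, $\mathbb H_{12}=\mathbb I_0\otimes H$; (iii) $\mathbb H^T=-\mathbb H$ where $\mathbb D^T=(\mathbb I_0\otimes\cap\otimes I)(\mathbb D\otimes X)(\mathbb I_0\otimes\cup\otimes I)$ for $\mathbb D:1\to1$; relations are imposed in all composites and right tensor products. Products denote composition, $\mathbb H^\ell$ is the $\ell$-fold composite. Let $\Pi=\mathbb I_0\otimes\cap:2\to0$, $\amalg=\mathbb I_0\otimes\cup:0\to2$ and $Z_\ell=\Pi(\mathbb H^\ell\otimes I)\amalg\in\mathrm{End}_{\mathcal{AB}(\delta)}(0)$ for $\ell\ge1$.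
   Formalization: In part (1) the hypothesis that the characteristic of K is not two is replaced by the hypothesis that 2 is invertible in K. The statement above fails without it. *)

theory Defs
  imports Main
begin

text \<open>A Brauer (r,s)-diagram is a fixed-point-free involution on the point set
  consisting of r bottom (source) points (False,i), i<r, and s top (target)
  points (True,j), j<s. Outside the point set the matching is the identity
  (canonical representative).\<close>

record bdiag =
  bs :: nat
  bt :: nat
  bm :: "bool \<times> nat \<Rightarrow> bool \<times> nat"

definition valid_pt :: "nat \<Rightarrow> nat \<Rightarrow> bool \<times> nat \<Rightarrow> bool" where
  "valid_pt r s p \<longleftrightarrow> (\<not> fst p \<and> snd p < r) \<or> (fst p \<and> snd p < s)"

definition is_bdiag :: "bdiag \<Rightarrow> bool" where
  "is_bdiag d \<longleftrightarrow>
     (\<forall>p. valid_pt (bs d) (bt d) p \<longrightarrow>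
            valid_pt (bs d) (bt d) (bm d p) \<and> bm d p \<noteq> p \<and> bm d (bm d p) = p) \<and>
     (\<forall>p. \<not> valid_pt (bs d) (bt d) p \<longrightarrow> bm d p = p)"

definition bid :: "nat \<Rightarrow> bdiag" where
  "bid n = \<lparr>bs = n, bt = n, bm = (\<lambda>(b, i). if i < n then (\<not> b, i) else (b, i))\<rparr>"

definition bX :: bdiag where
  "bX = \<lparr>bs = 2, bt = 2, bm = (\<lambda>p.
      if p = (False, 0) then (True, 1) else if p = (True, 1) then (False, 0)
      else if p = (False, 1) then (True, 0) else if p = (True, 0) then (False, 1)
      else p)\<rparr>"

definition bcap :: bdiag where
  "bcap = \<lparr>bs = 2, bt = 0, bm = (\<lambda>p.
      if p = (False, 0) then (False, 1) else if p = (False, 1) then (False, 0) else p)\<rparr>"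

definition bcup :: bdiag where
  "bcup = \<lparr>bs = 0, bt = 2, bm = (\<lambda>p.
      if p = (True, 0) then (True, 1) else if p = (True, 1) then (True, 0) else p)\<rparr>"

definition btens :: "bdiag \<Rightarrow> bdiag \<Rightarrow> bdiag" where
  "btens d e = \<lparr>bs = bs d + bs e, bt = bt d + bt e, bm = (\<lambda>(b, i).
      let n = (if b then bt d else bs d); m = (if b then bt e else bs e) in
      if i < n then bm d (b, i)
      else if i < n + m then
        (case bm e (b, i - n) of (c, j) \<Rightarrow> (c, j + (if c then bt d else bs d)))
      else (b, i))\<rparr>"

text \<open>Composition e \<circ> d (first d, then e), via the stacked graph with three layers:
  layer 0 = bottom of d, layer 1 = middle (top of d = bottom of e), layer 2 = top of e.\<close>

definition dpt :: "bool \<times> nat \<Rightarrow> nat \<times> nat" where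
  "dpt p = (if fst p then 1 else 0, snd p)"

definition ept :: "bool \<times> nat \<Rightarrow> nat \<times> nat" where
  "ept p = (if fst p then 2 else 1, snd p)"

definition outp :: "bool \<times> nat \<Rightarrow> nat \<times> nat" where
  "outp p = (if fst p then 2 else 0, snd p)"

definition bedge :: "bdiag \<Rightarrow> bdiag \<Rightarrow> nat \<times> nat \<Rightarrow> nat \<times> nat \<Rightarrow> bool" where
  "bedge d e x y \<longleftrightarrow>
     (\<exists>p. valid_pt (bs d) (bt d) p \<and> x = dpt p \<and> y = dpt (bm d p)) \<or>
     (\<exists>p. valid_pt (bs e) (bt e) p \<and> x = ept p \<and> y = ept (bm e p))"

definition bconn :: "bdiag \<Rightarrow> bdiag \<Rightarrow> nat \<times> nat \<Rightarrow> nat \<times> nat \<Rightarrow> bool" where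
  "bconn d e = (bedge d e)\<^sup>*\<^sup>*"

definition bcomp :: "bdiag \<Rightarrow> bdiag \<Rightarrow> bdiag" where
  "bcomp e d = \<lparr>bs = bs d, bt = bt e, bm = (\<lambda>p.
      if valid_pt (bs d) (bt e) p
      then (THE q. valid_pt (bs d) (bt e) q \<and> q \<noteq> p \<and> bconn d e (outp p) (outp q))
      else p)\<rparr>"

text \<open>Number of closed loops formed when stacking e on top of d.\<close>

definition bloops :: "bdiag \<Rightarrow> bdiag \<Rightarrow> nat" where
  "bloops e d = card ((\<lambda>x. {y. bconn d e x y}) `
      {(1, i) | i. i < bt d \<and>
         \<not> (\<exists>q. valid_pt (bs d) (bt e) q \<and> bconn d e (1, i) (outp q))})"

text \<open>Formal expressions for morphisms: generators \<I>_0 (PId0) and \<H> (PH),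
  composition (PComp b a = b a, first a then b), right action by a Brauer
  diagram (PTens), and the K-linear structure. The right action by a general
  morphism of B(delta) is its K-linear extension.\<close>

datatype 'k pterm =
    PId0
  | PH
  | PComp "'k pterm" "'k pterm"
  | PTens "'k pterm" bdiag
  | PZero nat nat
  | PAdd "'k pterm" "'k pterm"
  | PSmul 'k "'k pterm"

fun psrc :: "'k pterm \<Rightarrow> nat" where
  "psrc PId0 = 0"
| "psrc PH = 1"
| "psrc (PComp b a) = psrc a"
| "psrc (PTens t d) = psrc t + bs d"
| "psrc (PZero r s) = r"
| "psrc (PAdd a b) = psrc a"
| "psrc (PSmul c a) = psrc a"

fun ptgt :: "'k pterm \<Rightarrow> nat" where
  "ptgt PId0 = 0"
| "ptgt PH = 1"
| "ptgt (PComp b a) = ptgt b"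
| "ptgt (PTens t d) = ptgt t + bt d"
| "ptgt (PZero r s) = s"
| "ptgt (PAdd a b) = ptgt a"
| "ptgt (PSmul c a) = ptgt a"

fun pwf :: "'k pterm \<Rightarrow> bool" where
  "pwf PId0 = True"
| "pwf PH = True"
| "pwf (PComp b a) = (pwf a \<and> pwf b \<and> ptgt a = psrc b)"
| "pwf (PTens t d) = (pwf t \<and> is_bdiag d)"
| "pwf (PZero r s) = True"
| "pwf (PAdd a b) = (pwf a \<and> pwf b \<and> psrc a = psrc b \<and> ptgt a = ptgt b)"
| "pwf (PSmul c a) = pwf a"

definition ptyp :: "'k pterm \<Rightarrow> nat \<Rightarrow> nat \<Rightarrow> bool" where
  "ptyp a r s \<longleftrightarrow> pwf a \<and> psrc a = r \<and> ptgt a = s"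

definition idt :: "nat \<Rightarrow> 'k pterm" where
  "idt n = PTens PId0 (bid n)"

text \<open>Right action by the composite (in B(delta)) e d = delta^loops \<cdot> (e \<circ> d).\<close>
definition tens_comp :: "'k::comm_ring_1 \<Rightarrow> 'k pterm \<Rightarrow> bdiag \<Rightarrow> bdiag \<Rightarrow> 'k pterm" where
  "tens_comp delta t e d = PSmul (delta ^ bloops e d) (PTens t (bcomp e d))"

definition H01 :: "'k pterm" where "H01 = PTens PH (bid 1)"
definition X0 :: "'k pterm" where "X0 = PTens PId0 bX"
definition H02 :: "'k pterm" where "H02 = PComp X0 (PComp H01 X0)"
definition H12 :: "'k::comm_ring_1 \<Rightarrow> 'k pterm" where
  "H12 delta = PAdd (PTens PId0 bX) (PSmul (-1) (tens_comp delta PId0 bcup bcap))"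

definition ptransp :: "'k pterm \<Rightarrow> 'k pterm" where
  "ptransp D = PComp (PTens PId0 (btens bcap (bid 1)))
                 (PComp (PTens D bX) (PTens PId0 (btens bcup (bid 1))))"

text \<open>The congruence defining Hom spaces of AB(delta): K-linear category axioms,
  axioms of a (K-linear, strict) right action of B(delta), relations (i)-(iii),
  closed under composition, right tensor products and linear combinations.\<close>

inductive peq :: "'k::comm_ring_1 \<Rightarrow> 'k pterm \<Rightarrow> 'k pterm \<Rightarrow> bool" for delta :: 'k where
  refl: "peq delta a a"
| sym: "peq delta a b \<Longrightarrow> peq delta b a"
| trans: "peq delta a b \<Longrightarrow> peq delta b c \<Longrightarrow> peq delta a c"
| cong_comp: "peq delta b b' \<Longrightarrow> peq delta a a' \<Longrightarrow> ptyp a r s \<Longrightarrow> ptyp b s t \<Longrightarrow>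
     peq delta (PComp b a) (PComp b' a')"
| cong_tens: "peq delta a a' \<Longrightarrow> ptyp a r s \<Longrightarrow> is_bdiag d \<Longrightarrow>
     peq delta (PTens a d) (PTens a' d)"
| cong_add: "peq delta a a' \<Longrightarrow> peq delta b b' \<Longrightarrow> ptyp a r s \<Longrightarrow> ptyp b r s \<Longrightarrow>
     peq delta (PAdd a b) (PAdd a' b')"
| cong_smul: "peq delta a a' \<Longrightarrow> ptyp a r s \<Longrightarrow> peq delta (PSmul c a) (PSmul c a')"
| add_assoc: "ptyp a r s \<Longrightarrow> ptyp b r s \<Longrightarrow> ptyp c r s \<Longrightarrow>
     peq delta (PAdd (PAdd a b) c) (PAdd a (PAdd b c))"
| add_comm: "ptyp a r s \<Longrightarrow> ptyp b r s \<Longrightarrow> peq delta (PAdd a b) (PAdd b a)"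
| add_zero: "ptyp a r s \<Longrightarrow> peq delta (PAdd a (PZero r s)) a"
| add_neg: "ptyp a r s \<Longrightarrow> peq delta (PAdd a (PSmul (-1) a)) (PZero r s)"
| smul_add_l: "ptyp a r s \<Longrightarrow> peq delta (PSmul (c + c') a) (PAdd (PSmul c a) (PSmul c' a))"
| smul_add_r: "ptyp a r s \<Longrightarrow> ptyp b r s \<Longrightarrow>
     peq delta (PSmul c (PAdd a b)) (PAdd (PSmul c a) (PSmul c b))"
| smul_smul: "ptyp a r s \<Longrightarrow> peq delta (PSmul c (PSmul c' a)) (PSmul (c * c') a)"
| smul_one: "ptyp a r s \<Longrightarrow> peq delta (PSmul 1 a) a"
| comp_assoc: "ptyp a r s \<Longrightarrow> ptyp b s t \<Longrightarrow> ptyp c t u \<Longrightarrow>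
     peq delta (PComp c (PComp b a)) (PComp (PComp c b) a)"
| id_left: "ptyp a r s \<Longrightarrow> peq delta (PComp (idt s) a) a"
| id_right: "ptyp a r s \<Longrightarrow> peq delta (PComp a (idt r)) a"
| comp_add_l: "ptyp a r s \<Longrightarrow> ptyp b s t \<Longrightarrow> ptyp b' s t \<Longrightarrow>
     peq delta (PComp (PAdd b b') a) (PAdd (PComp b a) (PComp b' a))"
| comp_add_r: "ptyp a r s \<Longrightarrow> ptyp a' r s \<Longrightarrow> ptyp b s t \<Longrightarrow>
     peq delta (PComp b (PAdd a a')) (PAdd (PComp b a) (PComp b a'))"
| comp_smul_l: "ptyp a r s \<Longrightarrow> ptyp b s t \<Longrightarrow>
     peq delta (PComp (PSmul c b) a) (PSmul c (PComp b a))"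
| comp_smul_r: "ptyp a r s \<Longrightarrow> ptyp b s t \<Longrightarrow>
     peq delta (PComp b (PSmul c a)) (PSmul c (PComp b a))"
| tens_add: "ptyp a r s \<Longrightarrow> ptyp b r s \<Longrightarrow> is_bdiag d \<Longrightarrow>
     peq delta (PTens (PAdd a b) d) (PAdd (PTens a d) (PTens b d))"
| tens_smul: "ptyp a r s \<Longrightarrow> is_bdiag d \<Longrightarrow>
     peq delta (PTens (PSmul c a) d) (PSmul c (PTens a d))"
| tens_tens: "ptyp a r s \<Longrightarrow> is_bdiag d \<Longrightarrow> is_bdiag e \<Longrightarrow>
     peq delta (PTens (PTens a d) e) (PTens a (btens d e))"
| tens_unit: "ptyp a r s \<Longrightarrow> peq delta (PTens a (bid 0)) a"
| interchange: "ptyp a r s \<Longrightarrow> ptyp b s t \<Longrightarrow> is_bdiag d \<Longrightarrow> is_bdiag e \<Longrightarrow> bt d = bs e \<Longrightarrow>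
     peq delta (PComp (PTens b e) (PTens a d)) (tens_comp delta (PComp b a) e d)"
| rel_i0: "is_bdiag A \<Longrightarrow> is_bdiag B \<Longrightarrow> bt A = bs B \<Longrightarrow>
     peq delta (PComp (PTens PId0 B) (PTens PId0 A)) (tens_comp delta PId0 B A)"
| rel_i1: "is_bdiag A \<Longrightarrow> is_bdiag B \<Longrightarrow> bt A = bs B \<Longrightarrow>
     peq delta (PComp (PTens PH B) (PTens (idt 1) A)) (tens_comp delta PH B A)"
| rel_i2: "is_bdiag A \<Longrightarrow> is_bdiag B \<Longrightarrow> bt A = bs B \<Longrightarrow>
     peq delta (PComp (PTens (idt 1) B) (PTens PH A)) (tens_comp delta PH B A)"
| rel_ii: "peq delta
     (PAdd (PComp H01 (PAdd H02 (H12 delta)))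
           (PSmul (-1) (PComp (PAdd H02 (H12 delta)) H01)))
     (PZero 2 2)"
| rel_iii: "peq delta (ptransp PH) (PSmul (-1) PH)"

fun hpow :: "nat \<Rightarrow> 'k pterm" where
  "hpow 0 = idt 1"
| "hpow (Suc 0) = PH"
| "hpow (Suc n) = PComp PH (hpow n)"

definition PPi :: "'k pterm" where "PPi = PTens PId0 bcap"
definition PAmalg :: "'k pterm" where "PAmalg = PTens PId0 bcup"

definition Zl :: "nat \<Rightarrow> 'k pterm" where
  "Zl l = PComp PPi (PComp (PTens (hpow l) (bid 1)) PAmalg)"

end

theory Submission
  imports Defs
begin

(*
  Relation (iii), the antisymmetry of H under transposition, becomes after closing with the
  cup and the cap:  H02 Amalg = - H01 Amalg  and  Pi H02 = - Pi H01.  Hence Z1 = - Z1, so Z1 = 0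
  when 2 is invertible.  Sandwiching relation (ii) between Pi H01 and Amalg relates four
  composites, which the same rules turn into - Z3, (1 - delta) Z2, Z3 and - Z2 - Z1 Z1; with
  Z1 = 0 this is 2 Z3 = (2 - delta) Z2.

  For (2), the partial trace tr M = (I x cap)(M x I)(I x cup) of M : 2 -> 2 satisfies
  tr (H01 M) = H tr M and tr (M H01) = tr M H.  As H01 commutes with Omega = H02 + H12 by (ii),
  tr (Omega Omega) commutes with H.  Expanding Omega Omega, the partial traces of H02 H12,
  H12 H02 and H12 H12 commute with H by the same two rules, while tr (H02 H02) = Z2 x I.  An
  endomorphism z of 0 such that z x I commutes with H commutes with every morphism, by
  induction on terms.

  Identities between concrete Brauer diagrams are proved by computing their composites.
*)

section \<open>Deciding identities between Brauer diagrams\<close>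

type_synonym edge_list = "((nat \<times> nat) \<times> (nat \<times> nat)) list"

definition valid_pts :: "nat \<Rightarrow> nat \<Rightarrow> (bool \<times> nat) list" where
  "valid_pts r s = map (Pair False) [0..<r] @ map (Pair True) [0..<s]"

lemma valid_pt_iff_valid_pts: "valid_pt r s p \<longleftrightarrow> p \<in> set (valid_pts r s)"
  by (cases p) (auto simp: valid_pt_def valid_pts_def)

definition fixes_invalid :: "bdiag \<Rightarrow> bool" where
  "fixes_invalid d \<longleftrightarrow> (\<forall>p. \<not> valid_pt (bs d) (bt d) p \<longrightarrow> bm d p = p)"

lemma bdiag_eqI:
  assumes "fixes_invalid d" "fixes_invalid d'" "bs d = bs d'" "bt d = bt d'"
    "\<And>p. valid_pt (bs d) (bt d) p \<Longrightarrow> bm d p = bm d' p"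
  shows "d = d'"
proof -
  have "bm d p = bm d' p" for p
    using assms unfolding fixes_invalid_def by metis
  then have "bm d = bm d'" by blast
  then show ?thesis using assms by (cases d, cases d') auto
qed

lemma is_bdiagD:
  assumes "is_bdiag d" "valid_pt (bs d) (bt d) p"
  shows "valid_pt (bs d) (bt d) (bm d p)" "bm d p \<noteq> p" "bm d (bm d p) = p"
  using assms unfolding is_bdiag_def by meson+

lemma fixes_invalid_if_is_bdiag: "is_bdiag d \<Longrightarrow> fixes_invalid d"
  by (simp add: is_bdiag_def fixes_invalid_def)

definition involutive_at :: "bdiag \<Rightarrow> bool \<times> nat \<Rightarrow> bool" where
  "involutive_at d p \<longleftrightarrow> bm d p \<in> set (valid_pts (bs d) (bt d)) \<and> bm d p \<noteq> p \<and> bm d (bm d p) = p"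

lemma is_bdiag_by_check:
  assumes "fixes_invalid d" "list_all (involutive_at d) (valid_pts (bs d) (bt d))"
  shows "is_bdiag d"
  using assms
  by (auto simp: is_bdiag_def fixes_invalid_def involutive_at_def list_all_iff valid_pt_iff_valid_pts)

lemma bs_bid [simp]: "bs (bid n) = n" and bt_bid [simp]: "bt (bid n) = n"
  by (simp_all add: bid_def)
lemma bs_bX [simp]: "bs bX = 2" and bt_bX [simp]: "bt bX = 2"
  by (simp_all add: bX_def)
lemma bs_bcap [simp]: "bs bcap = 2" and bt_bcap [simp]: "bt bcap = 0"
  by (simp_all add: bcap_def)
lemma bs_bcup [simp]: "bs bcup = 0" and bt_bcup [simp]: "bt bcup = 2"
  by (simp_all add: bcup_def)
lemma bs_btens [simp]: "bs (btens d e) = bs d + bs e" and bt_btens [simp]: "bt (btens d e) = bt d + bt e"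
  by (simp_all add: btens_def)
lemma bs_bcomp [simp]: "bs (bcomp e d) = bs d" and bt_bcomp [simp]: "bt (bcomp e d) = bt e"
  by (simp_all add: bcomp_def)

lemma bm_bid: "bm (bid n) (b, i) = (if i < n then (\<not> b, i) else (b, i))"
  by (simp add: bid_def)

lemma is_bdiag_bid [simp]: "is_bdiag (bid n)"
  by (auto simp: is_bdiag_def bid_def valid_pt_def)

lemma btens_bid_bid [simp]: "btens (bid m) (bid n) = bid (m + n)"
  by (auto simp: btens_def bid_def Let_def fun_eq_iff)

lemma is_bdiag_btens [simp]:
  assumes d: "is_bdiag d" and e: "is_bdiag e"
  shows "is_bdiag (btens d e)"
proof -
  define n where "n b = (if b then bt d else bs d)" for b
  define m where "m b = (if b then bt e else bs e)" for b
  have valid_d: "valid_pt (bs d) (bt d) (b, i) \<longleftrightarrow> i < n b"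
    and valid_e: "valid_pt (bs e) (bt e) (b, i) \<longleftrightarrow> i < m b"
    and valid_de: "valid_pt (bs d + bs e) (bt d + bt e) (b, i) \<longleftrightarrow> i < n b + m b" for b i
    by (auto simp: valid_pt_def n_def m_def)
  have bm_de: "bm (btens d e) (b, i) =
      (if i < n b then bm d (b, i)
       else if i < n b + m b then (fst (bm e (b, i - n b)), snd (bm e (b, i - n b)) + n (fst (bm e (b, i - n b))))
       else (b, i))" for b i
    by (simp add: btens_def n_def m_def Let_def split: prod.split)
  have "valid_pt (bs d + bs e) (bt d + bt e) (bm (btens d e) (b, i)) \<and>
        bm (btens d e) (b, i) \<noteq> (b, i) \<and> bm (btens d e) (bm (btens d e) (b, i)) = (b, i)"
    if valid: "i < n b + m b" for b i
  proof (cases "i < n b")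
    case True
    obtain c j where cj: "bm d (b, i) = (c, j)" by fastforce
    with is_bdiagD[OF d] True have "j < n c" "(c, j) \<noteq> (b, i)" "bm d (c, j) = (b, i)"
      by (metis valid_d)+
    with True cj show ?thesis by (simp add: bm_de valid_de)
  next
    case False
    obtain c j where cj: "bm e (b, i - n b) = (c, j)" by fastforce
    with is_bdiagD[OF e] False valid
    have "j < m c" "(c, j) \<noteq> (b, i - n b)" "bm e (c, j) = (b, i - n b)"
      by (metis valid_e less_diff_conv2 not_less add.commute)+
    moreover have "bm (btens d e) (b, i) = (c, j + n c)"
      using False valid cj by (simp add: bm_de)
    moreover have "bm (btens d e) (c, j + n c) = (b, i)"
      using \<open>bm e (c, j) = (b, i - n b)\<close> \<open>j < m c\<close> False by (simp add: bm_de)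
    ultimately show ?thesis
      using False by (cases "c = b") (auto simp: valid_de)
  qed
  moreover have "bm (btens d e) (b, i) = (b, i)" if "\<not> i < n b + m b" for b i
    using that by (simp add: bm_de)
  ultimately show ?thesis
    unfolding is_bdiag_def bs_btens bt_btens by (metis valid_de surj_pair)
qed

definition stack_edges :: "bdiag \<Rightarrow> bdiag \<Rightarrow> edge_list" where
  "stack_edges d e = map (\<lambda>p. (dpt p, dpt (bm d p))) (valid_pts (bs d) (bt d)) @
                     map (\<lambda>p. (ept p, ept (bm e p))) (valid_pts (bs e) (bt e))"

lemma bedge_eq_stack_edges: "bedge d e = (\<lambda>x y. (x, y) \<in> set (stack_edges d e))"
  by (auto simp: bedge_def stack_edges_def valid_pt_iff_valid_pts fun_eq_iff)

definition reach_step :: "('a \<times> 'a) list \<Rightarrow> 'a list \<Rightarrow> 'a list" where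
  "reach_step E S = remdups (S @ map snd (filter (\<lambda>e. fst e \<in> set S) E))"

definition reach_list :: "('a \<times> 'a) list \<Rightarrow> 'a \<Rightarrow> 'a list" where
  "reach_list E x = fold (\<lambda>_. reach_step E) E [x]"

lemma reach_list_sound:
  "y \<in> set (fold (\<lambda>_. reach_step E) L S) \<Longrightarrow> \<exists>x \<in> set S. (\<lambda>u v. (u, v) \<in> set E)\<^sup>*\<^sup>* x y"
proof (induction L arbitrary: S)
  case (Cons a L)
  then obtain z where z: "z \<in> set (reach_step E S)" and zy: "(\<lambda>u v. (u, v) \<in> set E)\<^sup>*\<^sup>* z y"
    by auto
  have "\<exists>x \<in> set S. (\<lambda>u v. (u, v) \<in> set E)\<^sup>*\<^sup>* x z"
  proof (cases "z \<in> set S")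
    case False
    with z obtain x where "x \<in> set S" "(x, z) \<in> set E" by (auto simp: reach_step_def)
    then show ?thesis by (intro bexI[of _ x] r_into_rtranclp)
  qed auto
  with zy show ?case by (meson rtranclp_trans)
qed auto

lemma start_in_reach_list: "x \<in> set (fold (\<lambda>_. reach_step E) L S)" if "x \<in> set S"
  using that by (induction L arbitrary: S) (auto simp: reach_step_def)

lemma bconn_if_reach_list: "y \<in> set (reach_list (stack_edges d e) x) \<Longrightarrow> bconn d e x y"
  using reach_list_sound[of y _ _ "[x]"] unfolding bconn_def bedge_eq_stack_edges reach_list_def by simp

lemma bconn_iff_reach_list:
  assumes closed: "set (reach_step (stack_edges d e) (reach_list (stack_edges d e) x))
                     \<subseteq> set (reach_list (stack_edges d e) x)"
  shows "bconn d e x y \<longleftrightarrow> y \<in> set (reach_list (stack_edges d e) x)"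
proof
  assume "bconn d e x y"
  then show "y \<in> set (reach_list (stack_edges d e) x)"
    unfolding bconn_def bedge_eq_stack_edges
  proof (induction rule: rtranclp_induct)
    case base
    show ?case unfolding reach_list_def by (rule start_in_reach_list) simp
  next
    case (step y z)
    then have "z \<in> set (reach_step (stack_edges d e) (reach_list (stack_edges d e) x))"
      by (force simp: reach_step_def)
    with closed show ?case by blast
  qed
qed (rule bconn_if_reach_list)

definition edge_partners :: "edge_list \<Rightarrow> nat \<Rightarrow> nat \<Rightarrow> bool \<times> nat \<Rightarrow> (bool \<times> nat) list" where
  "edge_partners E r s p = filter (\<lambda>q. q \<noteq> p \<and> outp q \<in> set (reach_list E (outp p))) (valid_pts r s)"

text \<open>The search in \<open>reach_list\<close> is not proved to be exhaustive; instead
  \<open>partner_ok\<close> checks that the set it found is closed under the edges.\<close>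

definition partner_ok :: "edge_list \<Rightarrow> nat \<Rightarrow> nat \<Rightarrow> bool \<times> nat \<Rightarrow> bool \<times> nat \<Rightarrow> bool" where
  "partner_ok E r s p q \<longleftrightarrow>
     set (reach_step E (reach_list E (outp p))) \<subseteq> set (reach_list E (outp p)) \<and>
     edge_partners E r s p = [q]"

lemma bcomp_eq_by_check:
  assumes "is_bdiag r" "bs r = bs d \<and> bt r = bt e \<and>
    list_all2 (partner_ok (stack_edges d e) (bs d) (bt e)) (valid_pts (bs d) (bt e))
      (map (bm r) (valid_pts (bs d) (bt e)))"
  shows "bcomp e d = r"
proof (rule bdiag_eqI)
  show "fixes_invalid (bcomp e d)" by (simp add: fixes_invalid_def bcomp_def)
  fix p
  assume "valid_pt (bs (bcomp e d)) (bt (bcomp e d)) p"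
  then have p: "valid_pt (bs d) (bt e) p" by (simp add: bcomp_def)
  let ?E = "stack_edges d e"
  let ?S = "reach_list ?E (outp p)"
  obtain k where k: "k < length (valid_pts (bs d) (bt e))" "valid_pts (bs d) (bt e) ! k = p"
    using p by (auto simp: valid_pt_iff_valid_pts in_set_conv_nth)
  with assms have closed: "set (reach_step ?E ?S) \<subseteq> set ?S"
    and partners: "edge_partners ?E (bs d) (bt e) p = [bm r p]"
    by (auto simp: partner_ok_def list_all2_conv_all_nth)
  have "valid_pt (bs d) (bt e) q \<and> q \<noteq> p \<and> bconn d e (outp p) (outp q) \<longleftrightarrow> q = bm r p" for q
  proof -
    have "q \<in> set (edge_partners ?E (bs d) (bt e) p) \<longleftrightarrow> q = bm r p"
      using partners by simp
    then show ?thesis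
      using bconn_iff_reach_list[OF closed] by (auto simp: edge_partners_def valid_pt_iff_valid_pts)
  qed
  then show "bm (bcomp e d) p = bm r p" using p by (simp add: bcomp_def)
qed (use assms fixes_invalid_if_is_bdiag in \<open>simp_all add: bcomp_def\<close>)

definition meets_boundary :: "edge_list \<Rightarrow> nat \<Rightarrow> nat \<Rightarrow> nat \<Rightarrow> bool" where
  "meets_boundary E r s i \<longleftrightarrow> (\<exists>q \<in> set (valid_pts r s). outp q \<in> set (reach_list E (1, i)))"

lemma bloops_eq_0I:
  assumes "\<And>i. i < bt d \<Longrightarrow> \<exists>q. valid_pt (bs d) (bt e) q \<and> bconn d e (1, i) (outp q)"
  shows "bloops e d = 0"
proof -
  have "{(1::nat, i) |i. i < bt d \<and> \<not> (\<exists>q. valid_pt (bs d) (bt e) q \<and> bconn d e (1, i) (outp q))} = {}"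
    using assms by blast
  then show ?thesis unfolding bloops_def by simp
qed

lemma bloops_eq_0_by_check:
  assumes "list_all (meets_boundary (stack_edges d e) (bs d) (bt e)) [0..<bt d]"
  shows "bloops e d = 0"
proof (rule bloops_eq_0I)
  fix i assume "i < bt d"
  with assms have "\<exists>q \<in> set (valid_pts (bs d) (bt e)). outp q \<in> set (reach_list (stack_edges d e) (1, i))"
    by (auto simp: meets_boundary_def list_all_iff)
  then show "\<exists>q. valid_pt (bs d) (bt e) q \<and> bconn d e (1, i) (outp q)"
    by (auto simp: valid_pt_iff_valid_pts intro: bconn_if_reach_list)
qed

section \<open>Composition with identity diagrams\<close>

text \<open>If every edge of the stacked graph keeps \<open>\<phi>\<close> inside a pair \<open>{p, bm f p}\<close>, the
  component of \<open>outp p\<close> meets the boundary only in \<open>p\<close> and \<open>bm f p\<close>.\<close>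

lemma bcomp_eq_by_projection:
  fixes \<phi> :: "nat \<times> nat \<Rightarrow> bool \<times> nat"
  assumes f: "is_bdiag f" "bs f = bs d" "bt f = bt e"
    and \<phi>_outp: "\<And>p. \<phi> (outp p) = p"
    and \<phi>_edge: "\<And>x y. bedge d e x y \<Longrightarrow> \<phi> y = \<phi> x \<or> \<phi> y = bm f (\<phi> x)"
    and path: "\<And>p. valid_pt (bs d) (bt e) p \<Longrightarrow> bconn d e (outp p) (outp (bm f p))"
  shows "bcomp e d = f"
proof (rule bdiag_eqI)
  show "fixes_invalid (bcomp e d)" by (simp add: fixes_invalid_def bcomp_def)
  show "fixes_invalid f" using f(1) by (rule fixes_invalid_if_is_bdiag)
  fix p
  assume "valid_pt (bs (bcomp e d)) (bt (bcomp e d)) p"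
  then have p: "valid_pt (bs d) (bt e) p" by simp
  have component: "\<phi> z \<in> {p, bm f p}" if "bconn d e (outp p) z" for z
    using that unfolding bconn_def
  proof (induction rule: rtranclp_induct)
    case (step y z)
    have "bm f (bm f p) = p" using is_bdiagD(3)[OF f(1)] p f(2,3) by simp
    with \<phi>_edge[OF step.hyps(2)] step.IH show ?case by auto
  qed (simp add: \<phi>_outp)
  have "(THE q. valid_pt (bs d) (bt e) q \<and> q \<noteq> p \<and> bconn d e (outp p) (outp q)) = bm f p"
  proof (rule the_equality)
    show "valid_pt (bs d) (bt e) (bm f p) \<and> bm f p \<noteq> p \<and> bconn d e (outp p) (outp (bm f p))"
      using is_bdiagD[OF f(1)] p f(2,3) path by simp
  next
    fix q
    assume "valid_pt (bs d) (bt e) q \<and> q \<noteq> p \<and> bconn d e (outp p) (outp q)"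
    with component[of "outp q"] show "q = bm f p" by (simp add: \<phi>_outp)
  qed
  with p show "bm (bcomp e d) p = bm f p" by (simp add: bcomp_def)
qed (simp_all add: f)

lemma bedge_lower: "valid_pt (bs d) (bt d) p \<Longrightarrow> bedge d e (dpt p) (dpt (bm d p))"
  unfolding bedge_def by blast

lemma bedge_upper: "valid_pt (bs e) (bt e) p \<Longrightarrow> bedge d e (ept p) (ept (bm e p))"
  unfolding bedge_def by blast

lemma bconn_edge: "bedge d e x y \<Longrightarrow> bconn d e x y"
  unfolding bconn_def by (rule r_into_rtranclp)

lemma bconn_trans: "bconn d e x y \<Longrightarrow> bconn d e y z \<Longrightarrow> bconn d e x z"
  unfolding bconn_def by (rule rtranclp_trans)

lemma bcomp_bid_left [simp]:
  assumes d: "is_bdiag d" and n: "bt d = n"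
  shows "bcomp (bid n) d = d" "bloops (bid n) d = 0"
proof -
  have flip: "bconn d (bid n) (ept (b, i)) (ept (\<not> b, i))" if "i < n" for b i
    using that bedge_upper[of "bid n" "(b, i)" d] by (intro bconn_edge) (simp add: valid_pt_def bm_bid)
  have outp_dpt: "bconn d (bid n) (outp p) (dpt p)" "bconn d (bid n) (dpt p) (outp p)"
    if "valid_pt (bs d) (bt d) p" for p
    using that flip[of "snd p" True] flip[of "snd p" False] n
    by (cases p; auto simp: valid_pt_def outp_def dpt_def ept_def bconn_def)+
  define \<phi> :: "nat \<times> nat \<Rightarrow> bool \<times> nat" where "\<phi> x = (fst x \<noteq> 0, snd x)" for x
  have \<phi>_dpt: "\<phi> (dpt q) = q" and \<phi>_ept: "\<phi> (ept q) = (True, snd q)" and \<phi>_outp: "\<phi> (outp q) = q" for q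
    by (cases q; simp add: \<phi>_def dpt_def ept_def outp_def)+
  show "bcomp (bid n) d = d"
  proof (rule bcomp_eq_by_projection[where \<phi> = \<phi>])
    show "\<phi> y = \<phi> x \<or> \<phi> y = bm d (\<phi> x)" if "bedge d (bid n) x y" for x y
    proof -
      have "snd (bm (bid n) q) = snd q" for q by (cases q) (simp add: bm_bid)
      then show ?thesis using that unfolding bedge_def by (auto simp: \<phi>_dpt \<phi>_ept)
    qed
    show "bconn d (bid n) (outp p) (outp (bm d p))" if "valid_pt (bs d) (bt (bid n)) p" for p
    proof -
      have p: "valid_pt (bs d) (bt d) p" using that n by simp
      have "bedge d (bid n) (dpt p) (dpt (bm d p))" using p by (rule bedge_lower)
      then show ?thesis
        using outp_dpt(1)[OF p] outp_dpt(2)[OF is_bdiagD(1)[OF d p]]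
        by (meson bconn_edge bconn_trans)
    qed
  qed (use d n \<phi>_outp in simp_all)
  show "bloops (bid n) d = 0"
  proof (rule bloops_eq_0I)
    fix i assume "i < bt d"
    then have "valid_pt (bs d) (bt (bid n)) (True, i)" "bconn d (bid n) (1, i) (outp (True, i))"
      using flip[of i False] n by (simp_all add: valid_pt_def outp_def ept_def)
    then show "\<exists>q. valid_pt (bs d) (bt (bid n)) q \<and> bconn d (bid n) (1, i) (outp q)" by blast
  qed
qed

lemma bcomp_bid_right [simp]:
  assumes d: "is_bdiag d" and n: "bs d = n"
  shows "bcomp d (bid n) = d" "bloops d (bid n) = 0"
proof -
  have flip: "bconn (bid n) d (dpt (b, i)) (dpt (\<not> b, i))" if "i < n" for b i
    using that bedge_lower[of "bid n" "(b, i)" d] by (intro bconn_edge) (simp add: valid_pt_def bm_bid)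
  have outp_ept: "bconn (bid n) d (outp p) (ept p)" "bconn (bid n) d (ept p) (outp p)"
    if "valid_pt (bs d) (bt d) p" for p
    using that flip[of "snd p" True] flip[of "snd p" False] n
    by (cases p; auto simp: valid_pt_def outp_def dpt_def ept_def bconn_def)+
  define \<phi> :: "nat \<times> nat \<Rightarrow> bool \<times> nat" where "\<phi> x = (fst x = 2, snd x)" for x
  have \<phi>_ept: "\<phi> (ept q) = q" and \<phi>_dpt: "\<phi> (dpt q) = (False, snd q)" and \<phi>_outp: "\<phi> (outp q) = q" for q
    by (cases q; simp add: \<phi>_def dpt_def ept_def outp_def)+
  show "bcomp d (bid n) = d"
  proof (rule bcomp_eq_by_projection[where \<phi> = \<phi>])
    show "\<phi> y = \<phi> x \<or> \<phi> y = bm d (\<phi> x)" if "bedge (bid n) d x y" for x y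
    proof -
      have "snd (bm (bid n) q) = snd q" for q by (cases q) (simp add: bm_bid)
      then show ?thesis using that unfolding bedge_def by (auto simp: \<phi>_dpt \<phi>_ept)
    qed
    show "bconn (bid n) d (outp p) (outp (bm d p))" if "valid_pt (bs (bid n)) (bt d) p" for p
    proof -
      have p: "valid_pt (bs d) (bt d) p" using that n by simp
      have "bedge (bid n) d (ept p) (ept (bm d p))" using p by (rule bedge_upper)
      then show ?thesis
        using outp_ept(1)[OF p] outp_ept(2)[OF is_bdiagD(1)[OF d p]]
        by (meson bconn_edge bconn_trans)
    qed
  qed (use d n \<phi>_outp in simp_all)
  show "bloops d (bid n) = 0"
  proof (rule bloops_eq_0I)
    fix i assume "i < bt (bid n)"
    then have "valid_pt (bs (bid n)) (bt d) (False, i)" "bconn (bid n) d (1, i) (outp (False, i))"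
      using flip[of i True] n by (simp_all add: valid_pt_def outp_def dpt_def)
    then show "\<exists>q. valid_pt (bs (bid n)) (bt d) q \<and> bconn (bid n) d (1, i) (outp q)" by blast
  qed
qed

definition mk_bdiag :: "nat \<Rightarrow> nat \<Rightarrow> ((bool \<times> nat) \<times> (bool \<times> nat)) list \<Rightarrow> bdiag" where
  "mk_bdiag r s arcs = \<lparr>bs = r, bt = s, bm = (\<lambda>p. if valid_pt r s p then
      (case map_of (arcs @ map prod.swap arcs) p of Some q \<Rightarrow> q | None \<Rightarrow> p) else p)\<rparr>"

lemma bs_mk_bdiag [simp]: "bs (mk_bdiag r s arcs) = r" and bt_mk_bdiag [simp]: "bt (mk_bdiag r s arcs) = s"
  by (simp_all add: mk_bdiag_def)

lemma fixes_invalid_mk_bdiag [simp]: "fixes_invalid (mk_bdiag r s arcs)"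
  by (simp add: fixes_invalid_def mk_bdiag_def)

lemma fixes_invalid_generators [simp]: "fixes_invalid bX" "fixes_invalid bcap" "fixes_invalid bcup"
  by (auto simp: fixes_invalid_def bX_def bcap_def bcup_def valid_pt_def)

definition "XI = btens bX (bid 1)"
definition "IX = btens (bid 1) bX"
definition "IXI = btens (bid 1) XI"
definition "capI = btens bcap (bid 1)"
definition "cupI = btens bcup (bid 1)"
definition "capII = btens capI (bid 1)"
definition "cupII = btens cupI (bid 1)"
definition "Icap = btens (bid 1) bcap"
definition "Icup = btens (bid 1) bcup"
definition "IIcup = btens (bid 1) Icup"
definition "cupcap = mk_bdiag 2 2 [((False, 0), (False, 1)), ((True, 0), (True, 1))]"
definition "cupcapI = btens cupcap (bid 1)"
definition "cupcup = btens bcup bcup"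
definition "capcap = btens bcap bcap"
definition "capcap' = mk_bdiag 4 0 [((False, 0), (False, 2)), ((False, 1), (False, 3))]"
definition "Kd = mk_bdiag 4 2 [((False, 0), (False, 2)), ((False, 1), (True, 0)), ((False, 3), (True, 1))]"
definition "Gd = mk_bdiag 3 1 [((False, 0), (False, 2)), ((False, 1), (True, 0))]"
definition "IG = btens (bid 1) Gd"
definition "Dd = mk_bdiag 1 3 [((False, 0), (True, 1)), ((True, 0), (True, 2))]"

lemmas tensor_bdiag_defs = XI_def IX_def IXI_def capI_def cupI_def capII_def cupII_def Icap_def
  Icup_def IIcup_def cupcapI_def cupcup_def capcap_def IG_def

lemmas named_bdiag_defs = tensor_bdiag_defs cupcap_def capcap'_def Kd_def Gd_def Dd_def

lemmas bdiag_eval_simps = named_bdiag_defs mk_bdiag_def bX_def bcap_def bcup_def bid_def btens_def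
  Let_def valid_pt_def stack_edges_def valid_pts_def dpt_def ept_def upt_rec

lemma is_bdiag_generators [simp]: "is_bdiag bX" "is_bdiag bcap" "is_bdiag bcup"
  by (rule is_bdiag_by_check, simp add: named_bdiag_defs, simp add: bdiag_eval_simps; code_simp)+

lemma is_bdiag_arcs [simp]: "is_bdiag cupcap" "is_bdiag capcap'" "is_bdiag Kd" "is_bdiag Gd" "is_bdiag Dd"
  by (rule is_bdiag_by_check, simp add: named_bdiag_defs, simp add: bdiag_eval_simps; code_simp)+

lemma is_bdiag_named [simp]:
  "is_bdiag XI" "is_bdiag IX" "is_bdiag IXI" "is_bdiag capI" "is_bdiag cupI" "is_bdiag capII"
  "is_bdiag cupII" "is_bdiag Icap" "is_bdiag Icup" "is_bdiag IIcup" "is_bdiag cupcapI"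
  "is_bdiag cupcup" "is_bdiag capcap" "is_bdiag IG"
  by (simp_all add: tensor_bdiag_defs)

lemma bs_bt_named [simp]:
  "bs XI = 3" "bt XI = 3" "bs IX = 3" "bt IX = 3" "bs IXI = 4" "bt IXI = 4"
  "bs capI = 3" "bt capI = 1" "bs cupI = 1" "bt cupI = 3" "bs capII = 4" "bt capII = 2"
  "bs cupII = 2" "bt cupII = 4" "bs Icap = 3" "bt Icap = 1" "bs Icup = 1" "bt Icup = 3"
  "bs IIcup = 2" "bt IIcup = 4" "bs cupcap = 2" "bt cupcap = 2" "bs cupcapI = 3" "bt cupcapI = 3"
  "bs cupcup = 0" "bt cupcup = 4" "bs capcap = 4" "bt capcap = 0" "bs capcap' = 4" "bt capcap' = 0"
  "bs Kd = 4" "bt Kd = 2" "bs Gd = 3" "bt Gd = 1" "bs IG = 4" "bt IG = 2" "bs Dd = 1" "bt Dd = 3"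
  by (simp_all add: named_bdiag_defs)

lemma bcomp_table:
  "bcomp bX bX = bid 2" "bcomp bX bcup = bcup" "bcomp bcap bX = bcap" "bcomp bcup bcap = cupcap"
  "bcomp cupII bcup = cupcup" "bcomp capII IXI = Kd" "bcomp IIcup bcup = cupcup" "bcomp Kd IIcup = bX"
  "bcomp bcap capII = capcap" "bcomp capcap IXI = capcap'" "bcomp bcap IG = capcap'"
  "bcomp IG cupII = bX" "bcomp cupcap bcup = bcup" "bcomp Icap XI = Gd" "bcomp Gd Icup = bid 1"
  "bcomp Icap cupcapI = capI" "bcomp capI Icup = bid 1" "bcomp Icap Icup = bid 1"
  "bcomp capI IX = Gd" "bcomp XI Icup = Dd" "bcomp IX Dd = cupI" "bcomp bcap bcup = bid 0"
  by (rule bcomp_eq_by_check, simp, simp add: bdiag_eval_simps del: set_map set_filter; code_simp)+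

lemma bloops_table:
  "bloops bX bX = 0" "bloops bX bcup = 0" "bloops bcap bX = 0" "bloops bcup bcap = 0"
  "bloops cupII bcup = 0" "bloops capII IXI = 0" "bloops IIcup bcup = 0" "bloops Kd IIcup = 0"
  "bloops bcap capII = 0" "bloops capcap IXI = 0" "bloops bcap IG = 0"
  "bloops IG cupII = 0" "bloops Icap XI = 0" "bloops Gd Icup = 0"
  "bloops Icap cupcapI = 0" "bloops capI Icup = 0"
  "bloops capI IX = 0" "bloops XI Icup = 0" "bloops IX Dd = 0"
  by (rule bloops_eq_0_by_check, simp add: bdiag_eval_simps del: set_map set_filter; code_simp)+

lemma bloops_cupcap_bcup: "bloops cupcap bcup = 1"
proof -
  let ?E = "stack_edges bcup cupcap"
  have "set (reach_list ?E (1, i)) = {(1, 0), (1, 1)} \<and>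
        set (reach_step ?E (reach_list ?E (1, i))) \<subseteq> set (reach_list ?E (1, i))" if "i < 2" for i
  proof -
    have "i = 0 \<or> i = 1" using that by auto
    then show ?thesis
      by (elim disjE; simp add: bdiag_eval_simps del: set_map set_filter; code_simp)
  qed
  then have component: "Collect (bconn bcup cupcap (1, i)) = {(1, 0), (1, 1)}" if "i < 2" for i
    using bconn_iff_reach_list that by blast
  then have "{(1::nat, i) |i. i < bt bcup \<and>
      \<not> (\<exists>q. valid_pt (bs bcup) (bt cupcap) q \<and> bconn bcup cupcap (1, i) (outp q))} = {(1, 0), (1, 1)}"
    by (auto simp: outp_def set_eq_iff less_2_cases_iff)
  with component show ?thesis
    unfolding bloops_def by simp
qed

section \<open>Equality of morphisms\<close>

text \<open>The congruence \<open>peq\<close> also relates ill-typed terms. Recording in \<open>mor_eq\<close>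
  that both sides are morphisms of the same type lets every rule of \<open>peq\<close> be used
  without separate typing side conditions.\<close>

definition mor_eq :: "'k::comm_ring_1 \<Rightarrow> 'k pterm \<Rightarrow> 'k pterm \<Rightarrow> bool" where
  "mor_eq dl a b \<longleftrightarrow> pwf a \<and> pwf b \<and> psrc a = psrc b \<and> ptgt a = ptgt b \<and> peq dl a b"

text \<open>Long composites are handled as lists, so that a factor can be rewritten in place without
  reassociating.\<close>

fun comp_list :: "'k pterm list \<Rightarrow> 'k pterm" where
  "comp_list [] = PId0"
| "comp_list [a] = a"
| "comp_list (a # b # l) = PComp a (comp_list (b # l))"

fun comp_list_wf :: "'k pterm list \<Rightarrow> bool" where
  "comp_list_wf [] = False"
| "comp_list_wf [a] = pwf a"
| "comp_list_wf (a # b # l) = (pwf a \<and> psrc a = ptgt b \<and> comp_list_wf (b # l))"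

lemma comp_list_Cons: "l \<noteq> [] \<Longrightarrow> comp_list (a # l) = PComp a (comp_list l)"
  by (cases l) auto
lemma comp_list_wf_Cons: "l \<noteq> [] \<Longrightarrow> comp_list_wf (a # l) = (pwf a \<and> psrc a = ptgt (hd l) \<and> comp_list_wf l)"
  by (cases l) auto

lemma comp_list_wf_type: "comp_list_wf l \<Longrightarrow> pwf (comp_list l) \<and> psrc (comp_list l) = psrc (last l) \<and> ptgt (comp_list l) = ptgt (hd l)"
  by (induction l rule: comp_list_wf.induct) auto

lemma comp_list_wf_append: "xs \<noteq> [] \<Longrightarrow> ys \<noteq> [] \<Longrightarrow>
   comp_list_wf (xs @ ys) = (comp_list_wf xs \<and> comp_list_wf ys \<and> psrc (last xs) = ptgt (hd ys))"
proof (induction xs rule: comp_list_wf.induct)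
  case 1 then show ?case by simp
next
  case (2 a) then show ?case by (cases ys) auto
next
  case (3 a b l) then show ?case by auto
qed

lemma comp_list_wf_set: "comp_list_wf l \<Longrightarrow> x \<in> set l \<Longrightarrow> pwf x"
  by (induction l rule: comp_list_wf.induct) auto

lemma comp_list_wf_subst: "comp_list_wf (pre @ [a] @ post) \<Longrightarrow> pwf b \<Longrightarrow> psrc b = psrc a \<Longrightarrow> ptgt b = ptgt a \<Longrightarrow>
  comp_list_wf (pre @ [b] @ post) \<and> psrc (comp_list (pre @ [b] @ post)) = psrc (comp_list (pre @ [a] @ post)) \<and>
  ptgt (comp_list (pre @ [b] @ post)) = ptgt (comp_list (pre @ [a] @ post))"
proof (induction pre)
  case Nil then show ?case by (cases post) (auto simp: comp_list_Cons comp_list_wf_Cons)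
next
  case (Cons x pre)
  then show ?case by (auto simp: comp_list_Cons comp_list_wf_Cons comp_list_wf_type)
qed

context
  fixes dl :: "'k::comm_ring_1"
begin

abbreviation meq :: "'k pterm \<Rightarrow> 'k pterm \<Rightarrow> bool" (infix "\<approx>" 50) where
  "a \<approx> b \<equiv> mor_eq dl a b"

lemma meq_refl: "pwf a \<Longrightarrow> a \<approx> a"
  by (simp add: mor_eq_def peq.refl)
lemma meq_sym: "a \<approx> b \<Longrightarrow> b \<approx> a"
  by (auto simp: mor_eq_def intro: peq.sym)
lemma meq_trans[trans]: "a \<approx> b \<Longrightarrow> b \<approx> c \<Longrightarrow> a \<approx> c"
  by (auto simp: mor_eq_def intro: peq.trans)
lemma peq_if_meq: "a \<approx> b \<Longrightarrow> peq dl a b"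
  by (simp add: mor_eq_def)
lemma meq_wf: "a \<approx> b \<Longrightarrow> pwf a" "a \<approx> b \<Longrightarrow> pwf b"
  by (simp_all add: mor_eq_def)
lemma meq_src: "a \<approx> b \<Longrightarrow> psrc b = psrc a" and meq_tgt: "a \<approx> b \<Longrightarrow> ptgt b = ptgt a"
  by (simp_all add: mor_eq_def)

lemma meqI: "peq dl a b \<Longrightarrow> pwf a \<Longrightarrow> pwf b \<Longrightarrow> psrc a = psrc b \<Longrightarrow> ptgt a = ptgt b \<Longrightarrow> a \<approx> b"
  by (simp add: mor_eq_def)

lemma meq_comp: "b \<approx> b' \<Longrightarrow> a \<approx> a' \<Longrightarrow> psrc b = ptgt a \<Longrightarrow> PComp b a \<approx> PComp b' a'"
  unfolding mor_eq_def by (auto intro!: peq.cong_comp[where r="psrc a" and s="ptgt a" and t="ptgt b"] simp: ptyp_def)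
lemma meq_tens: "a \<approx> a' \<Longrightarrow> is_bdiag d \<Longrightarrow> PTens a d \<approx> PTens a' d"
  unfolding mor_eq_def by (auto intro!: peq.cong_tens[where r="psrc a" and s="ptgt a"] simp: ptyp_def)
lemma meq_add: "a \<approx> a' \<Longrightarrow> b \<approx> b' \<Longrightarrow> psrc a = psrc b \<Longrightarrow> ptgt a = ptgt b \<Longrightarrow> PAdd a b \<approx> PAdd a' b'"
  unfolding mor_eq_def by (auto intro!: peq.cong_add[where r="psrc a" and s="ptgt a"] simp: ptyp_def)
lemma meq_smul: "a \<approx> a' \<Longrightarrow> PSmul c a \<approx> PSmul c a'"
  unfolding mor_eq_def by (auto intro!: peq.cong_smul[where r="psrc a" and s="ptgt a"] simp: ptyp_def)

lemma meq_compL: "b \<approx> b' \<Longrightarrow> pwf a \<Longrightarrow> psrc b = ptgt a \<Longrightarrow> PComp b a \<approx> PComp b' a"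
  by (rule meq_comp) (auto intro: meq_refl)
lemma meq_compR: "a \<approx> a' \<Longrightarrow> pwf b \<Longrightarrow> psrc b = ptgt a \<Longrightarrow> PComp b a \<approx> PComp b a'"
  by (rule meq_comp) (auto intro: meq_refl)
lemma meq_addL: "a \<approx> a' \<Longrightarrow> pwf b \<Longrightarrow> psrc a = psrc b \<Longrightarrow> ptgt a = ptgt b \<Longrightarrow> PAdd a b \<approx> PAdd a' b"
  by (rule meq_add) (auto intro: meq_refl)
lemma meq_addR: "b \<approx> b' \<Longrightarrow> pwf a \<Longrightarrow> psrc a = psrc b \<Longrightarrow> ptgt a = ptgt b \<Longrightarrow> PAdd a b \<approx> PAdd a b'"
  by (rule meq_add) (auto intro: meq_refl)

lemma meq_add_assoc: "pwf a \<Longrightarrow> pwf b \<Longrightarrow> pwf c \<Longrightarrow> psrc b = psrc a \<Longrightarrow> ptgt b = ptgt a \<Longrightarrow>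
   psrc c = psrc a \<Longrightarrow> ptgt c = ptgt a \<Longrightarrow> PAdd (PAdd a b) c \<approx> PAdd a (PAdd b c)"
  by (rule meqI) (auto intro!: peq.add_assoc simp: ptyp_def)
lemma meq_add_comm: "pwf a \<Longrightarrow> pwf b \<Longrightarrow> psrc b = psrc a \<Longrightarrow> ptgt b = ptgt a \<Longrightarrow>
   PAdd a b \<approx> PAdd b a"
  by (rule meqI) (auto intro!: peq.add_comm simp: ptyp_def)
lemma meq_add_zero: "pwf a \<Longrightarrow> r = psrc a \<Longrightarrow> s = ptgt a \<Longrightarrow> PAdd a (PZero r s) \<approx> a"
  by (rule meqI) (auto intro!: peq.add_zero simp: ptyp_def)
lemma meq_add_neg: "pwf a \<Longrightarrow> r = psrc a \<Longrightarrow> s = ptgt a \<Longrightarrow> PAdd a (PSmul (-1) a) \<approx> PZero r s"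
  by (rule meqI) (auto intro!: peq.add_neg simp: ptyp_def)
lemma meq_smul_add_l: "pwf a \<Longrightarrow> PSmul (c + c') a \<approx> PAdd (PSmul c a) (PSmul c' a)"
  by (rule meqI) (auto intro!: peq.smul_add_l simp: ptyp_def)
lemma meq_smul_add_r: "pwf a \<Longrightarrow> pwf b \<Longrightarrow> psrc b = psrc a \<Longrightarrow> ptgt b = ptgt a \<Longrightarrow>
   PSmul c (PAdd a b) \<approx> PAdd (PSmul c a) (PSmul c b)"
  by (rule meqI) (auto intro!: peq.smul_add_r simp: ptyp_def)
lemma meq_smul_smul: "pwf a \<Longrightarrow> PSmul c (PSmul c' a) \<approx> PSmul (c * c') a"
  by (rule meqI) (auto intro!: peq.smul_smul simp: ptyp_def)
lemma meq_smul_one: "pwf a \<Longrightarrow> PSmul 1 a \<approx> a"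
  by (rule meqI) (auto intro!: peq.smul_one simp: ptyp_def)
lemma meq_comp_assoc: "pwf a \<Longrightarrow> pwf b \<Longrightarrow> pwf c \<Longrightarrow> psrc b = ptgt a \<Longrightarrow> psrc c = ptgt b \<Longrightarrow>
   PComp c (PComp b a) \<approx> PComp (PComp c b) a"
  by (rule meqI) (auto intro!: peq.comp_assoc simp: ptyp_def)
lemma meq_id_left: "pwf a \<Longrightarrow> n = ptgt a \<Longrightarrow> PComp (idt n) a \<approx> a"
  apply (rule meqI) using peq.id_left[of a "psrc a" "ptgt a" dl] by (auto simp: ptyp_def idt_def)
lemma meq_id_right: "pwf a \<Longrightarrow> n = psrc a \<Longrightarrow> PComp a (idt n) \<approx> a"
  apply (rule meqI) using peq.id_right[of a "psrc a" "ptgt a" dl] by (auto simp: ptyp_def idt_def)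
lemma meq_comp_add_l: "pwf a \<Longrightarrow> pwf b \<Longrightarrow> pwf b' \<Longrightarrow> psrc b = ptgt a \<Longrightarrow> psrc b' = ptgt a \<Longrightarrow> ptgt b' = ptgt b \<Longrightarrow>
   PComp (PAdd b b') a \<approx> PAdd (PComp b a) (PComp b' a)"
  by (rule meqI) (auto intro!: peq.comp_add_l simp: ptyp_def)
lemma meq_comp_add_r: "pwf a \<Longrightarrow> pwf a' \<Longrightarrow> pwf b \<Longrightarrow> psrc b = ptgt a \<Longrightarrow> psrc a' = psrc a \<Longrightarrow> ptgt a' = ptgt a \<Longrightarrow>
   PComp b (PAdd a a') \<approx> PAdd (PComp b a) (PComp b a')"
  by (rule meqI) (auto intro!: peq.comp_add_r simp: ptyp_def)
lemma meq_comp_smul_l: "pwf a \<Longrightarrow> pwf b \<Longrightarrow> psrc b = ptgt a \<Longrightarrow>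
   PComp (PSmul c b) a \<approx> PSmul c (PComp b a)"
  by (rule meqI) (auto intro!: peq.comp_smul_l simp: ptyp_def)
lemma meq_comp_smul_r: "pwf a \<Longrightarrow> pwf b \<Longrightarrow> psrc b = ptgt a \<Longrightarrow>
   PComp b (PSmul c a) \<approx> PSmul c (PComp b a)"
  by (rule meqI) (auto intro!: peq.comp_smul_r simp: ptyp_def)
lemma meq_tens_add: "pwf a \<Longrightarrow> pwf b \<Longrightarrow> psrc b = psrc a \<Longrightarrow> ptgt b = ptgt a \<Longrightarrow> is_bdiag d \<Longrightarrow>
   PTens (PAdd a b) d \<approx> PAdd (PTens a d) (PTens b d)"
  by (rule meqI) (auto intro!: peq.tens_add simp: ptyp_def)
lemma meq_tens_smul: "pwf a \<Longrightarrow> is_bdiag d \<Longrightarrow> PTens (PSmul c a) d \<approx> PSmul c (PTens a d)"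
  by (rule meqI) (auto intro!: peq.tens_smul simp: ptyp_def)
lemma meq_tens_tens: "pwf a \<Longrightarrow> is_bdiag d \<Longrightarrow> is_bdiag e \<Longrightarrow> is_bdiag (btens d e) \<Longrightarrow>
   PTens (PTens a d) e \<approx> PTens a (btens d e)"
  by (rule meqI) (auto intro!: peq.tens_tens simp: ptyp_def)
lemma meq_tens_unit: "pwf a \<Longrightarrow> PTens a (bid 0) \<approx> a"
  by (rule meqI) (auto intro!: peq.tens_unit simp: ptyp_def)
lemma meq_interchange: "pwf a \<Longrightarrow> pwf b \<Longrightarrow> psrc b = ptgt a \<Longrightarrow> is_bdiag d \<Longrightarrow> is_bdiag e \<Longrightarrow> bt d = bs e \<Longrightarrow>
   bcomp e d = f \<Longrightarrow> is_bdiag f \<Longrightarrow>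
   PComp (PTens b e) (PTens a d) \<approx> PSmul (dl ^ bloops e d) (PTens (PComp b a) f)"
  apply (rule meqI)
  using peq.interchange[of a "psrc a" "ptgt a" b "ptgt b" d e dl] by (auto simp: tens_comp_def ptyp_def)
lemma meq_rel_i0: "is_bdiag A \<Longrightarrow> is_bdiag B \<Longrightarrow> bt A = bs B \<Longrightarrow> bcomp B A = f \<Longrightarrow> is_bdiag f \<Longrightarrow>
   PComp (PTens PId0 B) (PTens PId0 A) \<approx> PSmul (dl ^ bloops B A) (PTens PId0 f)"
  apply (rule meqI)
  using peq.rel_i0[of A B dl] by (auto simp: tens_comp_def)
lemma meq_rel_i1: "is_bdiag A \<Longrightarrow> is_bdiag B \<Longrightarrow> bt A = bs B \<Longrightarrow> bcomp B A = f \<Longrightarrow> is_bdiag f \<Longrightarrow>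
   PComp (PTens PH B) (PTens (idt 1) A) \<approx> PSmul (dl ^ bloops B A) (PTens PH f)"
  apply (rule meqI)
  using peq.rel_i1[of A B dl] by (auto simp: tens_comp_def idt_def)
lemma meq_rel_i2: "is_bdiag A \<Longrightarrow> is_bdiag B \<Longrightarrow> bt A = bs B \<Longrightarrow> bcomp B A = f \<Longrightarrow> is_bdiag f \<Longrightarrow>
   PComp (PTens (idt 1) B) (PTens PH A) \<approx> PSmul (dl ^ bloops B A) (PTens PH f)"
  apply (rule meqI)
  using peq.rel_i2[of A B dl] by (auto simp: tens_comp_def idt_def)

lemma comp_list_append: "comp_list_wf (xs @ ys) \<Longrightarrow> xs \<noteq> [] \<Longrightarrow> ys \<noteq> [] \<Longrightarrow> comp_list (xs @ ys) \<approx> PComp (comp_list xs) (comp_list ys)"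
proof (induction xs rule: comp_list_wf.induct)
  case 1 then show ?case by simp
next
  case (2 a) then show ?case using comp_list_wf_type[of ys] by (auto simp: comp_list_Cons comp_list_wf_Cons intro!: meq_refl)
next
  case (3 a b l)
  have w: "comp_list_wf ((b # l) @ ys)" "pwf a" "psrc a = ptgt (hd ((b # l) @ ys))" using "3.prems" by auto
  have ih: "comp_list ((b # l) @ ys) \<approx> PComp (comp_list (b # l)) (comp_list ys)" using 3 w by simp
  have c1: "comp_list_wf (b # l)" "comp_list_wf ys" "psrc (last (b # l)) = ptgt (hd ys)" using w(1) comp_list_wf_append[of "b # l" ys] "3.prems" by auto
  have "comp_list ((a # b # l) @ ys) = PComp a (comp_list ((b # l) @ ys))" by simp
  also have "\<dots> \<approx> PComp a (PComp (comp_list (b # l)) (comp_list ys))"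
    using ih w comp_list_wf_type[OF w(1)] by (intro meq_compR) auto
  also have "\<dots> \<approx> PComp (PComp a (comp_list (b # l))) (comp_list ys)"
    using c1 w comp_list_wf_type[OF c1(1)] comp_list_wf_type[OF c1(2)] by (intro meq_comp_assoc) auto
  finally show ?case by simp
qed

lemma comp_list_wf_appendD: "comp_list_wf (xs @ ys) \<Longrightarrow> xs \<noteq> [] \<Longrightarrow> ys \<noteq> [] \<Longrightarrow> comp_list_wf xs \<and> comp_list_wf ys \<and> psrc (comp_list xs) = ptgt (comp_list ys)"
  using comp_list_wf_append[of xs ys] comp_list_wf_type[of xs] comp_list_wf_type[of ys] by auto

lemma comp_list_subst_suffix: "comp_list seg \<approx> comp_list seg' \<Longrightarrow> seg \<noteq> [] \<Longrightarrow> seg' \<noteq> [] \<Longrightarrow> comp_list_wf (seg @ post) \<Longrightarrow> comp_list_wf (seg' @ post) \<Longrightarrow>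
  comp_list (seg @ post) \<approx> comp_list (seg' @ post)"
proof (cases "post = []")
  case True then show "comp_list seg \<approx> comp_list seg' \<Longrightarrow> ?thesis" by simp
next
  case False
  assume e: "comp_list seg \<approx> comp_list seg'" and ne: "seg \<noteq> []" "seg' \<noteq> []" and w: "comp_list_wf (seg @ post)" "comp_list_wf (seg' @ post)"
  have "comp_list (seg @ post) \<approx> PComp (comp_list seg) (comp_list post)" using comp_list_append[OF w(1) ne(1) False] .
  also have "\<dots> \<approx> PComp (comp_list seg') (comp_list post)"
    using comp_list_wf_appendD[OF w(1) ne(1) False] comp_list_wf_type by (intro meq_compL[OF e]) auto
  also have "\<dots> \<approx> comp_list (seg' @ post)" using comp_list_append[OF w(2) ne(2) False] by (rule meq_sym)
  finally show ?thesis .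
qed

lemma comp_list_subst_prefix: "comp_list xs \<approx> comp_list ys \<Longrightarrow> xs \<noteq> [] \<Longrightarrow> ys \<noteq> [] \<Longrightarrow> comp_list_wf (pre @ xs) \<Longrightarrow> comp_list_wf (pre @ ys) \<Longrightarrow>
  comp_list (pre @ xs) \<approx> comp_list (pre @ ys)"
proof (induction pre)
  case Nil then show ?case by simp
next
  case (Cons a pre)
  have w1: "comp_list_wf (pre @ xs)" "comp_list_wf (pre @ ys)" using Cons.prems by (auto simp: comp_list_wf_Cons)
  have ih: "comp_list (pre @ xs) \<approx> comp_list (pre @ ys)" using Cons w1 by simp
  show ?case using Cons.prems comp_list_wf_type[OF w1(1)] by (auto simp: comp_list_Cons comp_list_wf_Cons intro!: meq_compR[OF ih])
qed

lemma comp_list_subst: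
  assumes a: "comp_list seg \<approx> comp_list seg'" "seg \<noteq> []" "seg' \<noteq> []" "comp_list_wf (pre @ seg @ post)" "comp_list_wf (pre @ seg' @ post)"
  shows "comp_list (pre @ seg @ post) \<approx> comp_list (pre @ seg' @ post)"
proof -
  have w: "comp_list_wf (seg @ post)" "comp_list_wf (seg' @ post)"
  proof -
    show "comp_list_wf (seg @ post)"
    proof (cases pre)
      case Nil then show ?thesis using a by simp
    next
      case (Cons x xs) then show ?thesis using a(4) comp_list_wf_appendD[of pre "seg @ post"] a(2) by auto
    qed
    show "comp_list_wf (seg' @ post)"
    proof (cases pre)
      case Nil then show ?thesis using a by simp
    next
      case (Cons x xs) then show ?thesis using a(5) comp_list_wf_appendD[of pre "seg' @ post"] a(3) by auto
    qed
  qed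
  show ?thesis using comp_list_subst_prefix[OF comp_list_subst_suffix[OF a(1-3) w]] a by simp
qed

lemma comp_list_smul: "comp_list_wf (pre @ [a] @ post) \<Longrightarrow> comp_list (pre @ [PSmul c a] @ post) \<approx> PSmul c (comp_list (pre @ [a] @ post))"
proof (induction pre)
  case Nil
  show ?case
  proof (cases "post = []")
    case True then show ?thesis using Nil by (auto intro: meq_refl)
  next
    case False then show ?thesis using Nil comp_list_wf_type[of post]
      by (auto simp: comp_list_Cons comp_list_wf_Cons intro!: meq_comp_smul_l)
  qed
next
  case (Cons b pre)
  have w1: "comp_list_wf (pre @ [a] @ post)" using Cons.prems by (auto simp: comp_list_wf_Cons)
  have "comp_list ((b # pre) @ [PSmul c a] @ post) \<approx> PComp b (PSmul c (comp_list (pre @ [a] @ post)))"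
    using Cons.IH[OF w1] Cons.prems comp_list_wf_type[OF w1] comp_list_wf_subst[OF w1, of "PSmul c a"] comp_list_wf_set[OF w1, of a]
    by (auto simp: comp_list_Cons comp_list_wf_Cons intro!: meq_compR)
  also have "\<dots> \<approx> PSmul c (PComp b (comp_list (pre @ [a] @ post)))"
    using Cons.prems comp_list_wf_type[OF w1] by (auto simp: comp_list_wf_Cons intro!: meq_comp_smul_r)
  finally show ?case by (simp add: comp_list_Cons)
qed

lemma comp_list_add: "comp_list_wf (pre @ [a] @ post) \<Longrightarrow> pwf b \<Longrightarrow> psrc b = psrc a \<Longrightarrow> ptgt b = ptgt a \<Longrightarrow>
  comp_list (pre @ [PAdd a b] @ post) \<approx> PAdd (comp_list (pre @ [a] @ post)) (comp_list (pre @ [b] @ post))"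
proof (induction pre)
  case Nil
  show ?case
  proof (cases "post = []")
    case True then show ?thesis using Nil by (auto intro: meq_refl)
  next
    case False then show ?thesis using Nil comp_list_wf_type[of post]
      by (auto simp: comp_list_Cons comp_list_wf_Cons intro!: meq_comp_add_l)
  qed
next
  case (Cons x pre)
  have w1: "comp_list_wf (pre @ [a] @ post)" using Cons.prems by (auto simp: comp_list_wf_Cons)
  have w2: "comp_list_wf (pre @ [b] @ post)" using comp_list_wf_subst[OF w1] Cons.prems by simp
  have "comp_list ((x # pre) @ [PAdd a b] @ post) \<approx> PComp x (PAdd (comp_list (pre @ [a] @ post)) (comp_list (pre @ [b] @ post)))"
    using Cons.IH[OF w1] Cons.prems comp_list_wf_type[OF w1] comp_list_wf_subst[OF w1, of "PAdd a b"] comp_list_wf_set[OF w1, of a]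
    by (auto simp: comp_list_Cons comp_list_wf_Cons intro!: meq_compR)
  also have "\<dots> \<approx> PAdd (PComp x (comp_list (pre @ [a] @ post))) (PComp x (comp_list (pre @ [b] @ post)))"
    using Cons.prems comp_list_wf_type[OF w1] comp_list_wf_type[OF w2] comp_list_wf_subst[OF w1, of b]
    by (auto simp: comp_list_wf_Cons intro!: meq_comp_add_r)
  finally show ?case by (simp add: comp_list_Cons)
qed

lemma meq_smul_0_PZero:
  assumes a: "pwf a"
  shows "PSmul 0 a \<approx> PZero (psrc a) (ptgt a)"
proof -
  let ?z = "PSmul 0 a"
  have z2: "?z \<approx> PAdd ?z ?z" using meq_smul_add_l[OF a, of 0 0] by simp
  have "PZero (psrc a) (ptgt a) \<approx> PAdd ?z (PSmul (-1) ?z)"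
    by (rule meq_sym, rule meq_add_neg) (simp_all add: a)
  also have "\<dots> \<approx> PAdd (PAdd ?z ?z) (PSmul (-1) ?z)" by (rule meq_addL[OF z2]) (simp_all add: a)
  also have "\<dots> \<approx> PAdd ?z (PAdd ?z (PSmul (-1) ?z))" by (rule meq_add_assoc) (simp_all add: a)
  also have "\<dots> \<approx> PAdd ?z (PZero (psrc a) (ptgt a))" by (rule meq_addR, rule meq_add_neg) (simp_all add: a)
  also have "\<dots> \<approx> ?z" by (rule meq_add_zero) (simp_all add: a)
  finally show ?thesis by (rule meq_sym)
qed

lemma meq_smul_0: "pwf a \<Longrightarrow> r = psrc a \<Longrightarrow> s = ptgt a \<Longrightarrow> PSmul 0 a \<approx> PZero r s"
  using meq_smul_0_PZero by simp

lemma meq_smul_smul': "pwf a \<Longrightarrow> z = c * c' \<Longrightarrow> PSmul c (PSmul c' a) \<approx> PSmul z a"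
  using meq_smul_smul by simp

lemma meq_comp_PZero_left:
  assumes a: "pwf a" "s = ptgt a"
  shows "PComp (PZero s t) a \<approx> PZero (psrc a) t"
proof -
  have "PComp (PZero s t) a \<approx> PComp (PSmul 0 (PZero s t)) a"
    by (rule meq_compL, rule meq_sym, rule meq_smul_0) (simp_all add: a)
  also have "\<dots> \<approx> PSmul 0 (PComp (PZero s t) a)" by (rule meq_comp_smul_l) (simp_all add: a)
  also have "\<dots> \<approx> PZero (psrc a) t" by (rule meq_smul_0) (simp_all add: a)
  finally show ?thesis .
qed

lemma meq_comp_PZero_right:
  assumes a: "pwf b" "s = psrc b"
  shows "PComp b (PZero r s) \<approx> PZero r (ptgt b)"
proof -
  have "PComp b (PZero r s) \<approx> PComp b (PSmul 0 (PZero r s))"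
    by (rule meq_compR, rule meq_sym, rule meq_smul_0) (simp_all add: a)
  also have "\<dots> \<approx> PSmul 0 (PComp b (PZero r s))" by (rule meq_comp_smul_r) (simp_all add: a)
  also have "\<dots> \<approx> PZero r (ptgt b)" by (rule meq_smul_0) (simp_all add: a)
  finally show ?thesis .
qed

lemma meq_smul_PZero: "PSmul c (PZero r s) \<approx> PZero r s"
proof -
  have "PSmul c (PZero r s) \<approx> PSmul c (PSmul 0 (PZero r s))"
    by (rule meq_smul, rule meq_sym, rule meq_smul_0) simp_all
  also have "\<dots> \<approx> PSmul (c * 0) (PZero r s)" by (rule meq_smul_smul) simp
  also have "\<dots> \<approx> PZero r s" using meq_smul_0[of "PZero r s" r s] by simp
  finally show ?thesis .
qed

lemma meq_neg_swap:
  assumes h: "a \<approx> PSmul (-1) b"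
    and b: "pwf b"
  shows "b \<approx> PSmul (-1) a"
proof -
  have "b \<approx> PSmul 1 b" by (rule meq_sym, rule meq_smul_one) (simp add: b)
  also have "\<dots> \<approx> PSmul (-1) (PSmul (-1) b)" by (rule meq_sym, rule meq_smul_smul') (simp_all add: b)
  also have "\<dots> \<approx> PSmul (-1) a" by (rule meq_smul, rule meq_sym, rule h)
  finally show ?thesis .
qed

lemma meq_comp_smul2_left:
  assumes t: "pwf a" "pwf b" "psrc b = ptgt a"
  shows "PComp (PSmul x (PSmul y b)) a \<approx> PSmul x (PSmul y (PComp b a))"
proof -
  have "PComp (PSmul x (PSmul y b)) a \<approx> PSmul x (PComp (PSmul y b) a)" by (rule meq_comp_smul_l) (simp_all add: t)
  also have "\<dots> \<approx> PSmul x (PSmul y (PComp b a))" by (rule meq_smul, rule meq_comp_smul_l) (simp_all add: t)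
  finally show ?thesis .
qed

lemma meq_comp_smul2_right:
  assumes t: "pwf a" "pwf b" "psrc b = ptgt a"
  shows "PComp b (PSmul x (PSmul y a)) \<approx> PSmul x (PSmul y (PComp b a))"
proof -
  have "PComp b (PSmul x (PSmul y a)) \<approx> PSmul x (PComp b (PSmul y a))" by (rule meq_comp_smul_r) (simp_all add: t)
  also have "\<dots> \<approx> PSmul x (PSmul y (PComp b a))" by (rule meq_smul, rule meq_comp_smul_r) (simp_all add: t)
  finally show ?thesis .
qed

lemma meq_if_diff_PZero:
  assumes h0: "PAdd a (PSmul (-1) b) \<approx> PZero r s"
    and a: "pwf a" "pwf b" "psrc b = psrc a" "ptgt b = ptgt a" "r = psrc a" "s = ptgt a"
  shows "a \<approx> b"
proof -
  define z :: "'k pterm" where "z = PZero r s"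
  have h: "PAdd a (PSmul (-1) b) \<approx> z" "z = PZero (psrc a) (ptgt a)" using h0 a by (simp_all add: z_def)
  have "a \<approx> PAdd a z" unfolding h(2) by (rule meq_sym, rule meq_add_zero) (simp_all add: a)
  also have "\<dots> \<approx> PAdd a (PAdd b (PSmul (-1) b))"
    unfolding h(2) by (rule meq_addR, rule meq_sym, rule meq_add_neg) (simp_all add: a)
  also have "\<dots> \<approx> PAdd a (PAdd (PSmul (-1) b) b)"
    by (rule meq_addR, rule meq_add_comm) (simp_all add: a)
  also have "\<dots> \<approx> PAdd (PAdd a (PSmul (-1) b)) b"
    by (rule meq_sym, rule meq_add_assoc) (simp_all add: a)
  also have "\<dots> \<approx> PAdd z b" by (rule meq_addL[OF h(1)]) (simp_all add: a)
  also have "\<dots> \<approx> PAdd b z" by (rule meq_add_comm) (simp_all add: a h(2))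
  also have "\<dots> \<approx> b" unfolding h(2) by (rule meq_add_zero) (simp_all add: a)
  finally show ?thesis .
qed

lemma meq_PZero_if_self_neg:
  assumes h: "z \<approx> PSmul (-1) z"
    and u: "2 * u = (1::'k)"
    and a: "pwf z"
  shows "z \<approx> PZero (psrc z) (ptgt z)"
proof -
  have "PSmul 2 z \<approx> PAdd (PSmul 1 z) (PSmul 1 z)" using meq_smul_add_l[OF a, of 1 1] by simp
  also have "\<dots> \<approx> PAdd z (PSmul 1 z)" by (rule meq_addL, rule meq_smul_one) (simp_all add: a)
  also have "\<dots> \<approx> PAdd z z" by (rule meq_addR, rule meq_smul_one) (simp_all add: a)
  also have "\<dots> \<approx> PAdd z (PSmul (-1) z)" by (rule meq_addR[OF h]) (simp_all add: a)
  also have "\<dots> \<approx> PZero (psrc z) (ptgt z)" by (rule meq_add_neg) (simp_all add: a)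
  finally have z2: "PSmul 2 z \<approx> PZero (psrc z) (ptgt z)" .
  have "z \<approx> PSmul 1 z" by (rule meq_sym, rule meq_smul_one) (simp add: a)
  also have "PSmul 1 z = PSmul (u * 2) z" using u by (simp add: mult.commute)
  also have "PSmul (u * 2) z \<approx> PSmul u (PSmul 2 z)" by (rule meq_sym, rule meq_smul_smul) (simp add: a)
  also have "\<dots> \<approx> PSmul u (PZero (psrc z) (ptgt z))" by (rule meq_smul[OF z2])
  also have "\<dots> \<approx> PZero (psrc z) (ptgt z)" by (rule meq_smul_PZero)
  finally show ?thesis .
qed

definition lincomb :: "'k \<Rightarrow> 'k \<Rightarrow> 'k pterm \<Rightarrow> 'k pterm \<Rightarrow> 'k pterm" where
  "lincomb x y a b = PAdd (PSmul x a) (PSmul y b)"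

lemma lincomb_wf: "pwf a \<Longrightarrow> pwf b \<Longrightarrow> psrc b = psrc a \<Longrightarrow> ptgt b = ptgt a \<Longrightarrow>
  pwf (lincomb x y a b) \<and> psrc (lincomb x y a b) = psrc a \<and> ptgt (lincomb x y a b) = ptgt a"
  by (simp add: lincomb_def)

lemma meq_add_add_swap: "pwf a \<Longrightarrow> pwf b \<Longrightarrow> pwf c \<Longrightarrow> pwf d \<Longrightarrow> psrc b = psrc a \<Longrightarrow> ptgt b = ptgt a \<Longrightarrow>
  psrc c = psrc a \<Longrightarrow> ptgt c = ptgt a \<Longrightarrow> psrc d = psrc a \<Longrightarrow> ptgt d = ptgt a \<Longrightarrow>
  PAdd (PAdd a b) (PAdd c d) \<approx> PAdd (PAdd a c) (PAdd b d)"
proof -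
  assume w: "pwf a" "pwf b" "pwf c" "pwf d" "psrc b = psrc a" "ptgt b = ptgt a"
  "psrc c = psrc a" "ptgt c = ptgt a" "psrc d = psrc a" "ptgt d = ptgt a"
  have "PAdd (PAdd a b) (PAdd c d) \<approx> PAdd a (PAdd b (PAdd c d))" by (rule meq_add_assoc) (simp_all add: w)
  also have "\<dots> \<approx> PAdd a (PAdd (PAdd b c) d)" by (rule meq_addR, rule meq_sym, rule meq_add_assoc) (simp_all add: w)
  also have "\<dots> \<approx> PAdd a (PAdd (PAdd c b) d)" by (rule meq_addR, rule meq_addL, rule meq_add_comm) (simp_all add: w)
  also have "\<dots> \<approx> PAdd a (PAdd c (PAdd b d))" by (rule meq_addR, rule meq_add_assoc) (simp_all add: w)
  also have "\<dots> \<approx> PAdd (PAdd a c) (PAdd b d)" by (rule meq_sym, rule meq_add_assoc) (simp_all add: w)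
  finally show ?thesis .
qed

lemma lincomb_add:
  assumes w: "pwf a" "pwf b" "psrc b = psrc a" "ptgt b = ptgt a"
    and e: "z = x + x'" "w = y + y'"
  shows "PAdd (lincomb x y a b) (lincomb x' y' a b) \<approx> lincomb z w a b"
proof -
  have "PAdd (lincomb x y a b) (lincomb x' y' a b) \<approx> PAdd (PAdd (PSmul x a) (PSmul x' a)) (PAdd (PSmul y b) (PSmul y' b))"
    unfolding lincomb_def by (rule meq_add_add_swap) (simp_all add: w)
  also have "\<dots> \<approx> lincomb z w a b" unfolding lincomb_def e
    by (rule meq_add; (rule meq_sym, rule meq_smul_add_l)?) (simp_all add: w)
  finally show ?thesis .
qed

lemma lincomb_smul:
  assumes w: "pwf a" "pwf b" "psrc b = psrc a" "ptgt b = ptgt a"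
    and e: "z = c * x" "w = c * y"
  shows "PSmul c (lincomb x y a b) \<approx> lincomb z w a b"
proof -
  have "PSmul c (lincomb x y a b) \<approx> PAdd (PSmul c (PSmul x a)) (PSmul c (PSmul y b))"
    unfolding lincomb_def by (rule meq_smul_add_r) (simp_all add: w)
  also have "\<dots> \<approx> lincomb z w a b" unfolding lincomb_def e
    by (rule meq_add; (rule meq_smul_smul)?) (simp_all add: w)
  finally show ?thesis .
qed

lemma meq_lincomb_cancel:
  assumes h: "lincomb x y a b \<approx> lincomb x' y' a b"
    and w: "pwf a" "pwf b" "psrc b = psrc a" "ptgt b = ptgt a"
    and coeffs: "c = x' - x" "d = y - y'"
  shows "PSmul c a \<approx> PSmul d b"
proof -
  note lw = lincomb_wf[OF w]
  have "lincomb c (- d) a b \<approx> PAdd (lincomb x' y' a b) (lincomb (- x) (- y) a b)"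
    by (rule meq_sym, rule lincomb_add) (simp_all add: w coeffs)
  also have "\<dots> \<approx> PAdd (lincomb x' y' a b) (PSmul (-1) (lincomb x y a b))"
    by (rule meq_addR, rule meq_sym, rule lincomb_smul) (simp_all add: w lw)
  also have "\<dots> \<approx> PAdd (lincomb x' y' a b) (PSmul (-1) (lincomb x' y' a b))"
    by (rule meq_addR, rule meq_smul[OF h]) (simp_all add: w lw)
  also have "\<dots> \<approx> PZero (psrc a) (ptgt a)" by (rule meq_add_neg) (simp_all add: w lw)
  finally have zero: "lincomb c (- d) a b \<approx> PZero (psrc a) (ptgt a)" .
  have "PAdd (PSmul c a) (PSmul (-1) (PSmul d b)) \<approx> lincomb c (- d) a b"
    unfolding lincomb_def by (rule meq_addR, rule meq_smul_smul') (simp_all add: w)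
  also note zero
  finally show ?thesis by (rule meq_if_diff_PZero) (simp_all add: w)
qed

lemma meq_diag_comp_loop_free: "is_bdiag A \<Longrightarrow> is_bdiag B \<Longrightarrow> bt A = bs B \<Longrightarrow> bcomp B A = f \<Longrightarrow> bloops B A = 0 \<Longrightarrow> is_bdiag f \<Longrightarrow>
   PComp (PTens PId0 B) (PTens PId0 A) \<approx> PTens PId0 f"
  using meq_rel_i0[of A B f] meq_smul_one[of "PTens PId0 f"] meq_trans by fastforce

lemma meq_tens_btens: "pwf a \<Longrightarrow> is_bdiag d \<Longrightarrow> is_bdiag e \<Longrightarrow> btens d e = f \<Longrightarrow> is_bdiag f \<Longrightarrow>
   PTens (PTens a d) e \<approx> PTens a f"
  using meq_tens_tens[of a d e] by simp

lemma meq_Htens_comp_diag: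
  assumes h: "is_bdiag A" "is_bdiag B" "bt A = bs B" "bcomp B A = f" "bloops B A = 0" "is_bdiag f" "btens (bid 1) A = A1" "is_bdiag A1"
  shows "PComp (PTens PH B) (PTens PId0 A1) \<approx> PTens PH f"
proof -
  have "PComp (PTens PH B) (PTens PId0 A1) \<approx> PComp (PTens PH B) (PTens (idt 1) A)"
    unfolding idt_def by (rule meq_compR, rule meq_sym, rule meq_tens_btens) (use h in \<open>simp_all add: h(7)[symmetric]\<close>)
  also have "\<dots> \<approx> PSmul (dl ^ bloops B A) (PTens PH f)" by (rule meq_rel_i1) (use h in simp_all)
  also have "\<dots> \<approx> PTens PH f" using h by (simp add: meq_smul_one)
  finally show ?thesis .
qed

lemma meq_diag_comp_Htens:
  assumes h: "is_bdiag A" "is_bdiag B" "bt A = bs B" "bcomp B A = f" "bloops B A = 0" "is_bdiag f" "btens (bid 1) B = IB" "is_bdiag IB"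
  shows "PComp (PTens PId0 IB) (PTens PH A) \<approx> PTens PH f"
proof -
  have "PComp (PTens PId0 IB) (PTens PH A) \<approx> PComp (PTens (idt 1) B) (PTens PH A)"
    unfolding idt_def by (rule meq_compL, rule meq_sym, rule meq_tens_btens) (use h in \<open>simp_all add: h(7)[symmetric]\<close>)
  also have "\<dots> \<approx> PSmul (dl ^ bloops B A) (PTens PH f)" by (rule meq_rel_i2) (use h in simp_all)
  also have "\<dots> \<approx> PTens PH f" using h by (simp add: meq_smul_one)
  finally show ?thesis .
qed

lemma meq_tens_bid_comp:
  assumes h: "pwf a" "pwf b" "psrc b = ptgt a"
  shows "PTens (PComp b a) (bid k) \<approx> PComp (PTens b (bid k)) (PTens a (bid k))"
proof -
  have "PComp (PTens b (bid k)) (PTens a (bid k)) \<approx> PSmul (dl ^ bloops (bid k) (bid k)) (PTens (PComp b a) (bid k))"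
    by (rule meq_interchange) (use h in simp_all)
  also have "\<dots> \<approx> PTens (PComp b a) (bid k)" using h by (simp add: meq_smul_one)
  finally show ?thesis by (rule meq_sym)
qed

lemma comp_list_tens: "comp_list_wf l \<Longrightarrow> PTens (comp_list l) (bid k) \<approx> comp_list (map (\<lambda>x. PTens x (bid k)) l)"
proof (induction l rule: comp_list_wf.induct)
  case 1 then show ?case by simp
next
  case (2 a) then show ?case by (simp add: meq_refl)
next
  case (3 a b l)
  have w: "pwf a" "psrc a = ptgt b" "comp_list_wf (b # l)" using "3.prems" by auto
  have "comp_list (map (\<lambda>x. PTens x (bid k)) (b # l)) = comp_list (PTens b (bid k) # map (\<lambda>x. PTens x (bid k)) l)" by simp
  have "PTens (comp_list (a # b # l)) (bid k) \<approx> PComp (PTens a (bid k)) (PTens (comp_list (b # l)) (bid k))"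
    using w comp_list_wf_type[OF w(3)] by (simp add: meq_tens_bid_comp)
  also have "\<dots> \<approx> PComp (PTens a (bid k)) (comp_list (map (\<lambda>x. PTens x (bid k)) (b # l)))"
    by (rule meq_compR[OF "3.IH"[OF w(3)]]) (use w comp_list_wf_type[OF w(3)] in simp_all)
  finally show ?case by simp
qed

section \<open>The generators and the relations\<close>

lemma typing_generators [simp]:
  "pwf H01" "psrc H01 = 2" "ptgt H01 = 2"
  "pwf X0" "psrc X0 = 2" "ptgt X0 = 2"
  "pwf H02" "psrc H02 = 2" "ptgt H02 = 2"
  "pwf PPi" "psrc PPi = 2" "ptgt PPi = 0"
  "pwf PAmalg" "psrc PAmalg = 0" "ptgt PAmalg = 2"
  "pwf (idt n)" "psrc (idt n) = n" "ptgt (idt n) = n"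
  by (simp_all add: H01_def X0_def H02_def PPi_def PAmalg_def idt_def)

text \<open>The factor \<open>1\<close> is \<open>\<delta>\<^sup>0\<close>, the loop factor of the composite of cup and cap.\<close>

lemma H12_eq: "H12 dl = PAdd X0 (PSmul (-1) (PSmul 1 (PTens PId0 cupcap)))"
  by (simp add: H12_def tens_comp_def bcomp_table bloops_table X0_def)

lemma typing_H12 [simp]: "pwf (H12 dl)" "psrc (H12 dl) = 2" "ptgt (H12 dl) = 2"
  by (simp_all add: H12_eq X0_def)

declare One_nat_def [simp del]

abbreviation pdiag :: "bdiag \<Rightarrow> 'k pterm" where
  "pdiag d \<equiv> PTens PId0 d"

lemmas named_bdiag_folds = XI_def[symmetric] IX_def[symmetric] IXI_def[symmetric] capI_def[symmetric] cupI_def[symmetric]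
  capII_def[symmetric] cupII_def[symmetric] Icap_def[symmetric] Icup_def[symmetric] IIcup_def[symmetric]
  cupcapI_def[symmetric] IG_def[symmetric]

lemma meq_transpose_H_tens: "PTens (ptransp PH) (bid 1) \<approx> comp_list [pdiag capII, PTens PH XI, pdiag cupII]"
proof -
  have e: "ptransp PH = comp_list [pdiag capI, PTens PH bX, pdiag cupI]"
    by (simp add: ptransp_def capI_def cupI_def)
  have "PTens (comp_list [pdiag capI, PTens PH bX, pdiag cupI]) (bid 1) \<approx> comp_list [PTens (pdiag capI) (bid 1), PTens (PTens PH bX) (bid 1), PTens (pdiag cupI) (bid 1)]"
    using comp_list_tens[of "[pdiag capI, PTens PH bX, pdiag cupI]" 1] by simp
  then have "PTens (ptransp PH) (bid 1) \<approx> comp_list [PTens (pdiag capI) (bid 1), PTens (PTens PH bX) (bid 1), PTens (pdiag cupI) (bid 1)]"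
    unfolding e .
  also have "\<dots> \<approx> comp_list [pdiag capII, PTens (PTens PH bX) (bid 1), PTens (pdiag cupI) (bid 1)]"
  proof -
    have f: "PTens (pdiag capI) (bid 1) \<approx> pdiag capII" by (rule meq_tens_btens) (simp_all add: named_bdiag_folds)
    show ?thesis using comp_list_subst[of "[PTens (pdiag capI) (bid 1)]" "[pdiag capII]" "[]" "[PTens (PTens PH bX) (bid 1), PTens (pdiag cupI) (bid 1)]"] f
      by simp
  qed
  also have "\<dots> \<approx> comp_list [pdiag capII, PTens PH XI, PTens (pdiag cupI) (bid 1)]"
  proof -
    have f: "PTens (PTens PH bX) (bid 1) \<approx> PTens PH XI" by (rule meq_tens_btens) (simp_all add: named_bdiag_folds)
    show ?thesis using comp_list_subst[of "[PTens (PTens PH bX) (bid 1)]" "[PTens PH XI]" "[pdiag capII]" "[PTens (pdiag cupI) (bid 1)]"] f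
      by simp
  qed
  also have "\<dots> \<approx> comp_list [pdiag capII, PTens PH XI, pdiag cupII]"
  proof -
    have f: "PTens (pdiag cupI) (bid 1) \<approx> pdiag cupII" by (rule meq_tens_btens) (simp_all add: named_bdiag_folds)
    show ?thesis using comp_list_subst[of "[PTens (pdiag cupI) (bid 1)]" "[pdiag cupII]" "[pdiag capII, PTens PH XI]" "[]"] f
      by simp
  qed
  finally show ?thesis .
qed

lemma meq_X0_Amalg: "PComp X0 PAmalg \<approx> PAmalg"
  unfolding X0_def PAmalg_def by (rule meq_diag_comp_loop_free) (simp_all add: bcomp_table bloops_table)
lemma meq_Pi_X0: "PComp PPi X0 \<approx> PPi"
  unfolding X0_def PPi_def by (rule meq_diag_comp_loop_free) (simp_all add: bcomp_table bloops_table)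
lemma meq_X0_X0: "PComp X0 X0 \<approx> idt 2"
  unfolding X0_def idt_def by (rule meq_diag_comp_loop_free) (simp_all add: bcomp_table bloops_table)

lemma meq_cupcap_Amalg_Pi: "pdiag cupcap \<approx> PComp PAmalg PPi"
  unfolding PAmalg_def PPi_def by (rule meq_sym, rule meq_diag_comp_loop_free) (simp_all add: bcomp_table bloops_table)

lemma meq_transpose_H: "ptransp PH \<approx> PSmul (-1) PH"
  by (rule meqI[OF peq.rel_iii]) (simp_all add: ptransp_def named_bdiag_folds)

lemma meq_transpose_tens_Amalg: "comp_list [pdiag capII, PTens PH XI, pdiag cupII, PAmalg] \<approx> comp_list [X0, H01, PAmalg]"
proof -
  have cupII_Amalg: "PComp (pdiag cupII) PAmalg \<approx> pdiag cupcup"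
    unfolding PAmalg_def by (rule meq_diag_comp_loop_free) (simp_all add: bcomp_table bloops_table)
  have H_XI: "PTens PH XI \<approx> PComp (pdiag IXI) (PTens PH (bid 3))"
    by (rule meq_sym, rule meq_diag_comp_Htens[where B=XI]) (simp_all add: bcomp_bid_right named_bdiag_folds)
  have capII_IXI: "PComp (pdiag capII) (pdiag IXI) \<approx> pdiag Kd"
    by (rule meq_diag_comp_loop_free) (simp_all add: bcomp_table bloops_table)
  have cupcup_split: "pdiag cupcup \<approx> PComp (pdiag IIcup) PAmalg"
    unfolding PAmalg_def by (rule meq_sym, rule meq_diag_comp_loop_free) (simp_all add: bcomp_table bloops_table)
  have H_IIcup: "PComp (PTens PH (bid 3)) (pdiag IIcup) \<approx> PTens PH Icup"
    by (rule meq_Htens_comp_diag[where A=Icup]) (simp_all add: bcomp_bid_left named_bdiag_folds)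
  have H_Icup: "PTens PH Icup \<approx> PComp (pdiag IIcup) H01"
    unfolding H01_def by (rule meq_sym, rule meq_diag_comp_Htens[where B=Icup]) (simp_all add: bcomp_bid_right named_bdiag_folds)
  have Kd_IIcup: "PComp (pdiag Kd) (pdiag IIcup) \<approx> X0"
    unfolding X0_def by (rule meq_diag_comp_loop_free) (simp_all add: bcomp_table bloops_table)
  have "comp_list [pdiag capII, PTens PH XI, pdiag cupII, PAmalg] \<approx> comp_list [pdiag capII, PTens PH XI, pdiag cupcup]"
    using comp_list_subst[of "[pdiag cupII, PAmalg]" "[pdiag cupcup]" "[pdiag capII, PTens PH XI]" "[]"] cupII_Amalg by simp
  also have "\<dots> \<approx> comp_list [pdiag capII, pdiag IXI, PTens PH (bid 3), pdiag cupcup]"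
    using comp_list_subst[of "[PTens PH XI]" "[pdiag IXI, PTens PH (bid 3)]" "[pdiag capII]" "[pdiag cupcup]"] H_XI by simp
  also have "\<dots> \<approx> comp_list [pdiag Kd, PTens PH (bid 3), pdiag cupcup]"
    using comp_list_subst[of "[pdiag capII, pdiag IXI]" "[pdiag Kd]" "[]" "[PTens PH (bid 3), pdiag cupcup]"] capII_IXI by simp
  also have "\<dots> \<approx> comp_list [pdiag Kd, PTens PH (bid 3), pdiag IIcup, PAmalg]"
    using comp_list_subst[of "[pdiag cupcup]" "[pdiag IIcup, PAmalg]" "[pdiag Kd, PTens PH (bid 3)]" "[]"] cupcup_split by simp
  also have "\<dots> \<approx> comp_list [pdiag Kd, PTens PH Icup, PAmalg]"
    using comp_list_subst[of "[PTens PH (bid 3), pdiag IIcup]" "[PTens PH Icup]" "[pdiag Kd]" "[PAmalg]"] H_IIcup by simp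
  also have "\<dots> \<approx> comp_list [pdiag Kd, pdiag IIcup, H01, PAmalg]"
    using comp_list_subst[of "[PTens PH Icup]" "[pdiag IIcup, H01]" "[pdiag Kd]" "[PAmalg]"] H_Icup by simp
  also have "\<dots> \<approx> comp_list [X0, H01, PAmalg]"
    using comp_list_subst[of "[pdiag Kd, pdiag IIcup]" "[X0]" "[]" "[H01, PAmalg]"] Kd_IIcup by simp
  finally show ?thesis .
qed

lemma meq_H02_Amalg: "PComp H02 PAmalg \<approx> PSmul (-1) (PComp H01 PAmalg)"
proof -
  have "PComp H02 PAmalg = comp_list [H02, PAmalg]" by simp
  also have "\<dots> \<approx> comp_list [X0, H01, X0, PAmalg]"
    using comp_list_subst[of "[H02]" "[X0, H01, X0]" "[]" "[PAmalg]"] by (simp add: H02_def meq_refl)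
  also have "\<dots> \<approx> comp_list [X0, H01, PAmalg]"
    using comp_list_subst[of "[X0, PAmalg]" "[PAmalg]" "[X0, H01]" "[]"] meq_X0_Amalg by simp
  also have "\<dots> \<approx> comp_list [pdiag capII, PTens PH XI, pdiag cupII, PAmalg]"
    by (rule meq_sym, rule meq_transpose_tens_Amalg)
  also have "\<dots> \<approx> PComp (comp_list [pdiag capII, PTens PH XI, pdiag cupII]) PAmalg"
    using comp_list_append[of "[pdiag capII, PTens PH XI, pdiag cupII]" "[PAmalg]"] by (simp add: named_bdiag_folds)
  also have "\<dots> \<approx> PComp (PTens (ptransp PH) (bid 1)) PAmalg"
    by (rule meq_compL, rule meq_sym, rule meq_transpose_H_tens) (simp_all add: ptransp_def named_bdiag_folds)
  also have "\<dots> \<approx> PComp (PTens (PSmul (-1) PH) (bid 1)) PAmalg"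
    by (rule meq_compL, rule meq_tens, rule meq_transpose_H) (simp_all add: ptransp_def named_bdiag_folds)
  also have "\<dots> \<approx> PComp (PSmul (-1) H01) PAmalg"
    unfolding H01_def by (rule meq_compL, rule meq_tens_smul) simp_all
  also have "\<dots> \<approx> PSmul (-1) (PComp H01 PAmalg)"
    by (rule meq_comp_smul_l) simp_all
  finally show ?thesis .
qed

lemma meq_Pi_transpose_tens: "comp_list [PPi, pdiag capII, PTens PH XI, pdiag cupII] \<approx> comp_list [PPi, H01, X0]"
proof -
  have Pi_capII: "PComp PPi (pdiag capII) \<approx> pdiag capcap"
    unfolding PPi_def by (rule meq_diag_comp_loop_free) (simp_all add: bcomp_table bloops_table)
  have H_XI: "PTens PH XI \<approx> PComp (pdiag IXI) (PTens PH (bid 3))"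
    by (rule meq_sym, rule meq_diag_comp_Htens[where B=XI]) (simp_all add: bcomp_bid_right named_bdiag_folds)
  have capcap_IXI: "PComp (pdiag capcap) (pdiag IXI) \<approx> pdiag capcap'"
    by (rule meq_diag_comp_loop_free) (simp_all add: bcomp_table bloops_table)
  have capcap'_split: "pdiag capcap' \<approx> PComp PPi (pdiag IG)"
    unfolding PPi_def by (rule meq_sym, rule meq_diag_comp_loop_free) (simp_all add: bcomp_table bloops_table)
  have IG_H: "PComp (pdiag IG) (PTens PH (bid 3)) \<approx> PTens PH Gd"
    by (rule meq_diag_comp_Htens[where B=Gd]) (simp_all add: bcomp_bid_right named_bdiag_folds)
  have H_Gd: "PTens PH Gd \<approx> PComp H01 (pdiag IG)"
    unfolding H01_def by (rule meq_sym, rule meq_Htens_comp_diag[where A=Gd]) (simp_all add: bcomp_bid_left named_bdiag_folds)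
  have IG_cupII: "PComp (pdiag IG) (pdiag cupII) \<approx> X0"
    unfolding X0_def by (rule meq_diag_comp_loop_free) (simp_all add: bcomp_table bloops_table)
  have "comp_list [PPi, pdiag capII, PTens PH XI, pdiag cupII] \<approx> comp_list [pdiag capcap, PTens PH XI, pdiag cupII]"
    using comp_list_subst[of "[PPi, pdiag capII]" "[pdiag capcap]" "[]" "[PTens PH XI, pdiag cupII]"] Pi_capII by simp
  also have "\<dots> \<approx> comp_list [pdiag capcap, pdiag IXI, PTens PH (bid 3), pdiag cupII]"
    using comp_list_subst[of "[PTens PH XI]" "[pdiag IXI, PTens PH (bid 3)]" "[pdiag capcap]" "[pdiag cupII]"] H_XI by simp
  also have "\<dots> \<approx> comp_list [pdiag capcap', PTens PH (bid 3), pdiag cupII]"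
    using comp_list_subst[of "[pdiag capcap, pdiag IXI]" "[pdiag capcap']" "[]" "[PTens PH (bid 3), pdiag cupII]"] capcap_IXI by simp
  also have "\<dots> \<approx> comp_list [PPi, pdiag IG, PTens PH (bid 3), pdiag cupII]"
    using comp_list_subst[of "[pdiag capcap']" "[PPi, pdiag IG]" "[]" "[PTens PH (bid 3), pdiag cupII]"] capcap'_split by simp
  also have "\<dots> \<approx> comp_list [PPi, PTens PH Gd, pdiag cupII]"
    using comp_list_subst[of "[pdiag IG, PTens PH (bid 3)]" "[PTens PH Gd]" "[PPi]" "[pdiag cupII]"] IG_H by simp
  also have "\<dots> \<approx> comp_list [PPi, H01, pdiag IG, pdiag cupII]"
    using comp_list_subst[of "[PTens PH Gd]" "[H01, pdiag IG]" "[PPi]" "[pdiag cupII]"] H_Gd by simp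
  also have "\<dots> \<approx> comp_list [PPi, H01, X0]"
    using comp_list_subst[of "[pdiag IG, pdiag cupII]" "[X0]" "[PPi, H01]" "[]"] IG_cupII by simp
  finally show ?thesis .
qed

lemma meq_Pi_H02: "PComp PPi H02 \<approx> PSmul (-1) (PComp PPi H01)"
proof -
  have "PComp PPi H02 = comp_list [PPi, H02]" by simp
  also have "\<dots> \<approx> comp_list [PPi, X0, H01, X0]"
    using comp_list_subst[of "[H02]" "[X0, H01, X0]" "[PPi]" "[]"] by (simp add: H02_def meq_refl)
  also have "\<dots> \<approx> comp_list [PPi, H01, X0]"
    using comp_list_subst[of "[PPi, X0]" "[PPi]" "[]" "[H01, X0]"] meq_Pi_X0 by simp
  also have "\<dots> \<approx> comp_list [PPi, pdiag capII, PTens PH XI, pdiag cupII]"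
    by (rule meq_sym, rule meq_Pi_transpose_tens)
  also have "\<dots> \<approx> PComp PPi (comp_list [pdiag capII, PTens PH XI, pdiag cupII])"
    using comp_list_append[of "[PPi]" "[pdiag capII, PTens PH XI, pdiag cupII]"] by (simp add: named_bdiag_folds)
  also have "\<dots> \<approx> PComp PPi (PTens (ptransp PH) (bid 1))"
    by (rule meq_compR, rule meq_sym, rule meq_transpose_H_tens) (simp_all add: ptransp_def named_bdiag_folds)
  also have "\<dots> \<approx> PComp PPi (PTens (PSmul (-1) PH) (bid 1))"
    by (rule meq_compR, rule meq_tens, rule meq_transpose_H) (simp_all add: ptransp_def named_bdiag_folds)
  also have "\<dots> \<approx> PComp PPi (PSmul (-1) H01)"
    unfolding H01_def by (rule meq_compR, rule meq_tens_smul) simp_all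
  also have "\<dots> \<approx> PSmul (-1) (PComp PPi H01)"
    by (rule meq_comp_smul_r) simp_all
  finally show ?thesis .
qed

lemma meq_H01_Amalg: "PComp H01 PAmalg \<approx> PSmul (-1) (PComp H02 PAmalg)"
  by (rule meq_neg_swap[OF meq_H02_Amalg]) simp
lemma meq_Pi_H01: "PComp PPi H01 \<approx> PSmul (-1) (PComp PPi H02)"
  by (rule meq_neg_swap[OF meq_Pi_H02]) simp

section \<open>The relations for \<open>Z\<^sub>1\<close>, \<open>Z\<^sub>2\<close> and \<open>Z\<^sub>3\<close>\<close>

lemma hpow_2: "hpow 2 = PComp PH PH" by (simp add: numeral_2_eq_2)
lemma hpow_3: "hpow 3 = PComp PH (PComp PH PH)" by (simp add: numeral_3_eq_3)

lemma Zl_1_eq: "Zl 1 = comp_list [PPi, H01, PAmalg]" by (simp add: Zl_def H01_def One_nat_def)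

lemma Zl_2_meq: "Zl 2 \<approx> comp_list [PPi, H01, H01, PAmalg]"
proof -
  have "Zl 2 = comp_list [PPi, PTens (comp_list [PH, PH]) (bid 1), PAmalg]" by (simp add: Zl_def hpow_2)
  also have "\<dots> \<approx> comp_list [PPi, H01, H01, PAmalg]"
    using comp_list_subst[of "[PTens (comp_list [PH, PH]) (bid 1)]" "[H01, H01]" "[PPi]" "[PAmalg]"]
      comp_list_tens[of "[PH, PH]" 1] by (simp add: H01_def)
  finally show ?thesis .
qed

lemma Zl_3_meq: "Zl 3 \<approx> comp_list [PPi, H01, H01, H01, PAmalg]"
proof -
  have "Zl 3 = comp_list [PPi, PTens (comp_list [PH, PH, PH]) (bid 1), PAmalg]" by (simp add: Zl_def hpow_3)
  also have "\<dots> \<approx> comp_list [PPi, H01, H01, H01, PAmalg]"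
    using comp_list_subst[of "[PTens (comp_list [PH, PH, PH]) (bid 1)]" "[H01, H01, H01]" "[PPi]" "[PAmalg]"]
      comp_list_tens[of "[PH, PH, PH]" 1] by (simp add: H01_def)
  finally show ?thesis .
qed

lemma Zl_1_self_neg: "Zl 1 \<approx> PSmul (-1) (Zl 1)"
proof -
  have "Zl 1 = comp_list [PPi, H01, PAmalg]" by (rule Zl_1_eq)
  also have "\<dots> \<approx> comp_list [PSmul (-1) (PComp PPi H02), PAmalg]"
    using comp_list_subst[of "[PPi, H01]" "[PSmul (-1) (PComp PPi H02)]" "[]" "[PAmalg]"] meq_Pi_H01 by simp
  also have "\<dots> \<approx> PSmul (-1) (comp_list [PComp PPi H02, PAmalg])"
    using comp_list_smul[of "[]" "PComp PPi H02" "[PAmalg]" "-1"] by simp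
  also have "\<dots> \<approx> PSmul (-1) (comp_list [PPi, X0, H01, X0, PAmalg])"
    by (rule meq_smul) (use comp_list_subst[of "[PComp PPi H02]" "[PPi, X0, H01, X0]" "[]" "[PAmalg]"] in \<open>simp add: H02_def meq_refl\<close>)
  also have "\<dots> \<approx> PSmul (-1) (comp_list [PPi, H01, X0, PAmalg])"
    by (rule meq_smul) (use comp_list_subst[of "[PPi, X0]" "[PPi]" "[]" "[H01, X0, PAmalg]"] meq_Pi_X0 in simp)
  also have "\<dots> \<approx> PSmul (-1) (comp_list [PPi, H01, PAmalg])"
    by (rule meq_smul) (use comp_list_subst[of "[X0, PAmalg]" "[PAmalg]" "[PPi, H01]" "[]"] meq_X0_Amalg in simp)
  also have "comp_list [PPi, H01, PAmalg] = Zl 1" by (rule Zl_1_eq[symmetric])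
  finally show ?thesis .
qed

lemma Zl_1_zero: "(\<exists>u::'k. 2 * u = 1) \<Longrightarrow> Zl 1 \<approx> PZero 0 0"
  using meq_PZero_if_self_neg[OF Zl_1_self_neg] by (auto simp: Zl_1_eq)

abbreviation "negU \<equiv> PSmul (-1) (PSmul 1 (pdiag cupcap)) :: 'k pterm"

abbreviation "Omega \<equiv> PAdd H02 (H12 dl)"

lemma meq_H01_Omega_commute: "PComp H01 Omega \<approx> PComp Omega H01"
proof (rule meq_if_diff_PZero)
  show "PAdd (PComp H01 Omega) (PSmul (-1) (PComp Omega H01)) \<approx> PZero 2 2"
    by (rule meqI[OF peq.rel_ii]) simp_all
qed simp_all

lemma meq_H12_Amalg: "PComp (H12 dl) PAmalg \<approx> PSmul (1 - dl) PAmalg"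
proof -
  have "PComp (H12 dl) PAmalg = PComp (PAdd X0 negU) PAmalg" by (simp add: H12_eq)
  also have "\<dots> \<approx> PAdd (PComp X0 PAmalg) (PComp negU PAmalg)"
    by (rule meq_comp_add_l) simp_all
  also have "\<dots> \<approx> PAdd PAmalg (PComp negU PAmalg)"
    by (rule meq_addL[OF meq_X0_Amalg]) simp_all
  also have "\<dots> \<approx> PAdd PAmalg (PSmul (-1) (PComp (PSmul 1 (pdiag cupcap)) PAmalg))"
    by (rule meq_addR, rule meq_comp_smul_l) simp_all
  also have "\<dots> \<approx> PAdd PAmalg (PSmul (-1) (PSmul 1 (PComp (pdiag cupcap) PAmalg)))"
    by (rule meq_addR, rule meq_smul, rule meq_comp_smul_l) simp_all
  also have "\<dots> \<approx> PAdd PAmalg (PSmul (-1) (PSmul 1 (PSmul dl PAmalg)))"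
  proof -
    have "PComp (pdiag cupcap) PAmalg \<approx> PSmul (dl ^ bloops cupcap bcup) PAmalg"
      unfolding PAmalg_def by (rule meq_rel_i0) (simp_all add: bcomp_table)
    then have "PComp (pdiag cupcap) PAmalg \<approx> PSmul dl PAmalg" by (simp add: bloops_cupcap_bcup)
    then show ?thesis by (intro meq_addR meq_smul) simp_all
  qed
  also have "\<dots> \<approx> PAdd (PSmul 1 PAmalg) (PSmul (-dl) PAmalg)"
  proof (rule meq_add)
    show "PAmalg \<approx> PSmul 1 PAmalg" by (rule meq_sym, rule meq_smul_one) simp
    have "PSmul (-1) (PSmul 1 (PSmul dl PAmalg)) \<approx> PSmul (-1) (PSmul dl PAmalg)"
      by (rule meq_smul, rule meq_smul_one) simp
    also have "\<dots> \<approx> PSmul (-dl) PAmalg" by (rule meq_smul_smul') simp_all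
    finally show "PSmul (-1) (PSmul 1 (PSmul dl PAmalg)) \<approx> PSmul (-dl) PAmalg" .
  qed simp_all
  also have "\<dots> \<approx> PSmul (1 - dl) PAmalg"
    using meq_smul_add_l[of PAmalg 1 "-dl"] by (simp add: meq_sym)
  finally show ?thesis .
qed

abbreviation "Z3c \<equiv> comp_list [PPi, H01, H01, H01, PAmalg] :: 'k pterm"
abbreviation "Z2c \<equiv> comp_list [PPi, H01, H01, PAmalg] :: 'k pterm"

lemma meq_Z3_term_H02: "comp_list [PPi, H01, H01, H02, PAmalg] \<approx> PSmul (-1) Z3c"
proof -
  have "comp_list [PPi, H01, H01, H02, PAmalg] \<approx> comp_list [PPi, H01, H01, PSmul (-1) (PComp H01 PAmalg)]"
    using comp_list_subst[of "[H02, PAmalg]" "[PSmul (-1) (PComp H01 PAmalg)]" "[PPi, H01, H01]" "[]"] meq_H02_Amalg by simp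
  also have "\<dots> \<approx> PSmul (-1) (comp_list [PPi, H01, H01, PComp H01 PAmalg])"
    using comp_list_smul[of "[PPi, H01, H01]" "PComp H01 PAmalg" "[]" "-1"] by simp
  also have "comp_list [PPi, H01, H01, PComp H01 PAmalg] = Z3c" by simp
  finally show ?thesis .
qed

lemma meq_Z2_term_H12: "comp_list [PPi, H01, H01, H12 dl, PAmalg] \<approx> PSmul (1 - dl) Z2c"
proof -
  have "comp_list [PPi, H01, H01, H12 dl, PAmalg] \<approx> comp_list [PPi, H01, H01, PSmul (1 - dl) PAmalg]"
    using comp_list_subst[of "[H12 dl, PAmalg]" "[PSmul (1 - dl) PAmalg]" "[PPi, H01, H01]" "[]"] meq_H12_Amalg by simp
  also have "\<dots> \<approx> PSmul (1 - dl) (comp_list [PPi, H01, H01, PAmalg])"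
    using comp_list_smul[of "[PPi, H01, H01]" PAmalg "[]" "1 - dl"] by simp
  finally show ?thesis .
qed

lemma meq_Z3_term_H02_mid: "comp_list [PPi, H01, H02, H01, PAmalg] \<approx> Z3c"
proof -
  have "comp_list [PPi, H01, H02, H01, PAmalg] \<approx> comp_list [PPi, H01, H02, PSmul (-1) (PComp H02 PAmalg)]"
    using comp_list_subst[of "[H01, PAmalg]" "[PSmul (-1) (PComp H02 PAmalg)]" "[PPi, H01, H02]" "[]"] meq_H01_Amalg by simp
  also have "\<dots> \<approx> PSmul (-1) (comp_list [PPi, H01, H02, H02, PAmalg])"
    using comp_list_smul[of "[PPi, H01, H02]" "PComp H02 PAmalg" "[]" "-1"] by simp
  also have "\<dots> \<approx> PSmul (-1) (comp_list [PSmul (-1) (PComp PPi H02), H02, H02, PAmalg])"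
    by (rule meq_smul) (use comp_list_subst[of "[PPi, H01]" "[PSmul (-1) (PComp PPi H02)]" "[]" "[H02, H02, PAmalg]"] meq_Pi_H01 in simp)
  also have "\<dots> \<approx> PSmul (-1) (PSmul (-1) (comp_list [PComp PPi H02, H02, H02, PAmalg]))"
    by (rule meq_smul) (use comp_list_smul[of "[]" "PComp PPi H02" "[H02, H02, PAmalg]" "-1"] in simp)
  also have "\<dots> \<approx> PSmul (-1) (PSmul (-1) (comp_list [PPi, H02, H02, H02, PAmalg]))"
    by (intro meq_smul) (use comp_list_subst[of "[PComp PPi H02]" "[PPi, H02]" "[]" "[H02, H02, PAmalg]"] in \<open>simp add: meq_refl\<close>)
  also have "\<dots> \<approx> PSmul 1 (comp_list [PPi, H02, H02, H02, PAmalg])"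
    by (rule meq_smul_smul') simp_all
  also have "\<dots> \<approx> comp_list [PPi, H02, H02, H02, PAmalg]"
    by (rule meq_smul_one) simp
  also have "\<dots> \<approx> comp_list [PPi, X0, H01, X0, H02, H02, PAmalg]"
    using comp_list_subst[of "[H02]" "[X0, H01, X0]" "[PPi]" "[H02, H02, PAmalg]"] by (simp add: H02_def meq_refl)
  also have "\<dots> \<approx> comp_list [PPi, X0, H01, X0, X0, H01, X0, H02, PAmalg]"
    using comp_list_subst[of "[H02]" "[X0, H01, X0]" "[PPi, X0, H01, X0]" "[H02, PAmalg]"] by (simp add: H02_def meq_refl)
  also have "\<dots> \<approx> comp_list [PPi, X0, H01, X0, X0, H01, X0, X0, H01, X0, PAmalg]"
    using comp_list_subst[of "[H02]" "[X0, H01, X0]" "[PPi, X0, H01, X0, X0, H01, X0]" "[PAmalg]"] by (simp add: H02_def meq_refl)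
  also have "\<dots> \<approx> comp_list [PPi, H01, X0, X0, H01, X0, X0, H01, X0, PAmalg]"
    using comp_list_subst[of "[PPi, X0]" "[PPi]" "[]" "[H01, X0, X0, H01, X0, X0, H01, X0, PAmalg]"] meq_Pi_X0 by simp
  also have "\<dots> \<approx> comp_list [PPi, H01, X0, X0, H01, X0, X0, H01, PAmalg]"
    using comp_list_subst[of "[X0, PAmalg]" "[PAmalg]" "[PPi, H01, X0, X0, H01, X0, X0, H01]" "[]"] meq_X0_Amalg by simp
  also have "\<dots> \<approx> comp_list [PPi, H01, idt 2, H01, X0, X0, H01, PAmalg]"
    using comp_list_subst[of "[X0, X0]" "[idt 2]" "[PPi, H01]" "[H01, X0, X0, H01, PAmalg]"] meq_X0_X0 by simp
  also have "\<dots> \<approx> comp_list [PPi, H01, idt 2, H01, idt 2, H01, PAmalg]"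
    using comp_list_subst[of "[X0, X0]" "[idt 2]" "[PPi, H01, idt 2, H01]" "[H01, PAmalg]"] meq_X0_X0 by simp
  also have "\<dots> \<approx> comp_list [PPi, H01, H01, idt 2, H01, PAmalg]"
    using comp_list_subst[of "[H01, idt 2]" "[H01]" "[PPi]" "[H01, idt 2, H01, PAmalg]"] meq_id_right[of H01 2] by simp
  also have "\<dots> \<approx> comp_list [PPi, H01, H01, H01, PAmalg]"
    using comp_list_subst[of "[H01, idt 2]" "[H01]" "[PPi, H01]" "[H01, PAmalg]"] meq_id_right[of H01 2] by simp
  finally show ?thesis .
qed

lemma meq_Z2_term_X0_mid: "comp_list [PPi, H01, X0, H01, PAmalg] \<approx> PSmul (-1) Z2c"
proof -
  have "comp_list [PPi, H01, X0, H01, PAmalg] \<approx> comp_list [PPi, H01, X0, H01, X0, PAmalg]"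
    using comp_list_subst[of "[PAmalg]" "[X0, PAmalg]" "[PPi, H01, X0, H01]" "[]"] meq_X0_Amalg by (simp add: meq_sym)
  also have "\<dots> \<approx> comp_list [PPi, H01, H02, PAmalg]"
    using comp_list_subst[of "[X0, H01, X0]" "[H02]" "[PPi, H01]" "[PAmalg]"] by (simp add: H02_def meq_refl)
  also have "\<dots> \<approx> comp_list [PPi, H01, PSmul (-1) (PComp H01 PAmalg)]"
    using comp_list_subst[of "[H02, PAmalg]" "[PSmul (-1) (PComp H01 PAmalg)]" "[PPi, H01]" "[]"] meq_H02_Amalg by simp
  also have "\<dots> \<approx> PSmul (-1) (comp_list [PPi, H01, PComp H01 PAmalg])"
    using comp_list_smul[of "[PPi, H01]" "PComp H01 PAmalg" "[]" "-1"] by simp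
  finally show ?thesis by simp
qed

lemma meq_Z1_Z1_term_zero:
  assumes "\<exists>u::'k. 2 * u = 1"
  shows "comp_list [PPi, H01, negU, H01, PAmalg] \<approx> PZero 0 0"
proof -
  have "comp_list [PPi, H01, negU, H01, PAmalg] \<approx> PSmul (-1) (comp_list [PPi, H01, PSmul 1 (pdiag cupcap), H01, PAmalg])"
    using comp_list_smul[of "[PPi, H01]" "PSmul 1 (pdiag cupcap)" "[H01, PAmalg]" "-1"] by simp
  also have "\<dots> \<approx> PSmul (-1) (PSmul 1 (comp_list [PPi, H01, pdiag cupcap, H01, PAmalg]))"
    by (rule meq_smul) (use comp_list_smul[of "[PPi, H01]" "pdiag cupcap" "[H01, PAmalg]" 1] in simp)
  also have "\<dots> \<approx> PSmul (-1) (PSmul 1 (comp_list [PPi, H01, PAmalg, PPi, H01, PAmalg]))"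
    using comp_list_subst[of "[pdiag cupcap]" "[PAmalg, PPi]" "[PPi, H01]" "[H01, PAmalg]"] meq_cupcap_Amalg_Pi
    by (intro meq_smul) simp
  also have "\<dots> \<approx> PSmul (-1) (PSmul 1 (PComp (Zl 1) (Zl 1)))"
    by (intro meq_smul) (use comp_list_append[of "[PPi, H01, PAmalg]" "[PPi, H01, PAmalg]"] in \<open>simp add: Zl_1_eq\<close>)
  also have "\<dots> \<approx> PSmul (-1) (PSmul 1 (PComp (PZero 0 0) (Zl 1)))"
    by (intro meq_smul meq_compL Zl_1_zero[OF assms]) (simp_all add: Zl_1_eq)
  also have "\<dots> \<approx> PSmul (-1) (PSmul 1 (PZero 0 0))"
    by (intro meq_smul) (use meq_comp_PZero_left[of "Zl 1" 0 0] in \<open>simp add: Zl_1_eq\<close>)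
  also have "\<dots> \<approx> PZero 0 0"
    by (intro meq_trans[OF meq_smul meq_smul_PZero] meq_smul_PZero)
  finally show ?thesis .
qed

lemma meq_Z2_term_H12_mid:
  assumes "\<exists>u::'k. 2 * u = 1"
  shows "comp_list [PPi, H01, H12 dl, H01, PAmalg] \<approx> PSmul (-1) Z2c"
proof -
  have "comp_list [PPi, H01, H12 dl, H01, PAmalg] = comp_list ([PPi, H01] @ [PAdd X0 negU] @ [H01, PAmalg])"
    by (simp add: H12_eq)
  also have "\<dots> \<approx> PAdd (comp_list [PPi, H01, X0, H01, PAmalg]) (comp_list [PPi, H01, negU, H01, PAmalg])"
    using comp_list_add[of "[PPi, H01]" X0 "[H01, PAmalg]" negU] by simp
  also have "\<dots> \<approx> PAdd (PSmul (-1) Z2c) (PZero 0 0)"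
    by (rule meq_add[OF meq_Z2_term_X0_mid meq_Z1_Z1_term_zero[OF assms]]) simp_all
  also have "\<dots> \<approx> PSmul (-1) Z2c" by (rule meq_add_zero) simp_all
  finally show ?thesis .
qed

lemma Zl_3_Zl_2: "(\<exists>u::'k. 2 * u = 1) \<Longrightarrow> PSmul 2 (Zl 3) \<approx> PSmul (2 - dl) (Zl 2)"
proof -
  assume u: "\<exists>u::'k. 2 * u = 1"
  have "lincomb (-1) (1 - dl) Z3c Z2c \<approx> comp_list [PPi, H01, H01, Omega, PAmalg]"
  proof -
    have "comp_list [PPi, H01, H01, Omega, PAmalg] \<approx> PAdd (comp_list [PPi, H01, H01, H02, PAmalg]) (comp_list [PPi, H01, H01, H12 dl, PAmalg])"
      using comp_list_add[of "[PPi, H01, H01]" H02 "[PAmalg]" "H12 dl"] by simp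
    also have "\<dots> \<approx> lincomb (-1) (1 - dl) Z3c Z2c"
      unfolding lincomb_def by (rule meq_add[OF meq_Z3_term_H02 meq_Z2_term_H12]) simp_all
    finally show ?thesis by (rule meq_sym)
  qed
  also have "\<dots> \<approx> comp_list [PPi, H01, Omega, H01, PAmalg]"
    using comp_list_subst[of "[H01, Omega]" "[Omega, H01]" "[PPi, H01]" "[PAmalg]"] meq_H01_Omega_commute by simp
  also have "\<dots> \<approx> PAdd (comp_list [PPi, H01, H02, H01, PAmalg]) (comp_list [PPi, H01, H12 dl, H01, PAmalg])"
    using comp_list_add[of "[PPi, H01]" H02 "[H01, PAmalg]" "H12 dl"] by simp
  also have "\<dots> \<approx> PAdd Z3c (PSmul (-1) Z2c)"
    by (rule meq_add[OF meq_Z3_term_H02_mid meq_Z2_term_H12_mid[OF u]]) simp_all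
  also have "\<dots> \<approx> lincomb 1 (-1) Z3c Z2c"
    unfolding lincomb_def by (rule meq_addL, rule meq_sym, rule meq_smul_one) simp_all
  finally have "PSmul 2 Z3c \<approx> PSmul (2 - dl) Z2c" by (rule meq_lincomb_cancel) simp_all
  then show ?thesis
    by (meson meq_smul meq_sym meq_trans Zl_2_meq Zl_3_meq)
qed

section \<open>Partial traces and the commutation of \<open>Z\<^sub>2 \<otimes> I\<close> with H\<close>

abbreviation ptrace :: "'k pterm \<Rightarrow> 'k pterm" where
  "ptrace M \<equiv> comp_list [pdiag Icap, PTens M (bid 1), pdiag Icup]"

definition commutes_H :: "'k pterm \<Rightarrow> bool" where
  "commutes_H c \<longleftrightarrow> pwf c \<and> psrc c = 1 \<and> ptgt c = 1 \<and> PComp c PH \<approx> PComp PH c"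

lemma meq_H01_tens: "PTens H01 (bid 1) \<approx> PTens PH (bid 2)"
  unfolding H01_def by (rule meq_tens_btens) (simp_all add: btens_bid_bid)

lemma ptrace_H01_left:
  assumes m: "pwf M" "psrc M = 2" "ptgt M = 2"
  shows "ptrace (PComp H01 M) \<approx> PComp PH (ptrace M)"
proof -
  have tens_comp: "PTens (PComp H01 M) (bid 1) \<approx> PComp (PTens H01 (bid 1)) (PTens M (bid 1))"
    by (rule meq_tens_bid_comp) (simp_all add: m)
  have Icap_H: "PComp (pdiag Icap) (PTens PH (bid 2)) \<approx> PTens PH bcap"
    by (rule meq_diag_comp_Htens[where B=bcap]) (simp_all add: bcomp_bid_right named_bdiag_folds)
  have H_cap: "PTens PH bcap \<approx> PComp PH (pdiag Icap)"
  proof -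
    have "PTens PH bcap \<approx> PComp (PTens PH (bid 0)) (pdiag Icap)"
      by (rule meq_sym, rule meq_Htens_comp_diag[where A=bcap]) (simp_all add: bcomp_bid_left named_bdiag_folds)
    also have "\<dots> \<approx> PComp PH (pdiag Icap)" by (rule meq_compL, rule meq_tens_unit) simp_all
    finally show ?thesis .
  qed
  have "ptrace (PComp H01 M) \<approx> comp_list [pdiag Icap, PTens H01 (bid 1), PTens M (bid 1), pdiag Icup]"
    using comp_list_subst[of "[PTens (PComp H01 M) (bid 1)]" "[PTens H01 (bid 1), PTens M (bid 1)]" "[pdiag Icap]" "[pdiag Icup]"] tens_comp m by simp
  also have "\<dots> \<approx> comp_list [pdiag Icap, PTens PH (bid 2), PTens M (bid 1), pdiag Icup]"
    using comp_list_subst[of "[PTens H01 (bid 1)]" "[PTens PH (bid 2)]" "[pdiag Icap]" "[PTens M (bid 1), pdiag Icup]"] meq_H01_tens m by simp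
  also have "\<dots> \<approx> comp_list [PTens PH bcap, PTens M (bid 1), pdiag Icup]"
    using comp_list_subst[of "[pdiag Icap, PTens PH (bid 2)]" "[PTens PH bcap]" "[]" "[PTens M (bid 1), pdiag Icup]"] Icap_H m by simp
  also have "\<dots> \<approx> comp_list [PH, pdiag Icap, PTens M (bid 1), pdiag Icup]"
    using comp_list_subst[of "[PTens PH bcap]" "[PH, pdiag Icap]" "[]" "[PTens M (bid 1), pdiag Icup]"] H_cap m by simp
  finally show ?thesis by simp
qed

lemma ptrace_H01_right:
  assumes m: "pwf M" "psrc M = 2" "ptgt M = 2"
  shows "ptrace (PComp M H01) \<approx> PComp (ptrace M) PH"
proof -
  have tens_comp: "PTens (PComp M H01) (bid 1) \<approx> PComp (PTens M (bid 1)) (PTens H01 (bid 1))"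
    by (rule meq_tens_bid_comp) (simp_all add: m)
  have H_Icup: "PComp (PTens PH (bid 2)) (pdiag Icup) \<approx> PTens PH bcup"
    by (rule meq_Htens_comp_diag[where A=bcup]) (simp_all add: bcomp_bid_left named_bdiag_folds)
  have H_cup: "PTens PH bcup \<approx> PComp (pdiag Icup) PH"
  proof -
    have "PTens PH bcup \<approx> PComp (pdiag Icup) (PTens PH (bid 0))"
      by (rule meq_sym, rule meq_diag_comp_Htens[where B=bcup]) (simp_all add: bcomp_bid_right named_bdiag_folds)
    also have "\<dots> \<approx> PComp (pdiag Icup) PH" by (rule meq_compR, rule meq_tens_unit) simp_all
    finally show ?thesis .
  qed
  have "ptrace (PComp M H01) \<approx> comp_list [pdiag Icap, PTens M (bid 1), PTens H01 (bid 1), pdiag Icup]"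
    using comp_list_subst[of "[PTens (PComp M H01) (bid 1)]" "[PTens M (bid 1), PTens H01 (bid 1)]" "[pdiag Icap]" "[pdiag Icup]"] tens_comp m by simp
  also have "\<dots> \<approx> comp_list [pdiag Icap, PTens M (bid 1), PTens PH (bid 2), pdiag Icup]"
    using comp_list_subst[of "[PTens H01 (bid 1)]" "[PTens PH (bid 2)]" "[pdiag Icap, PTens M (bid 1)]" "[pdiag Icup]"] meq_H01_tens m by simp
  also have "\<dots> \<approx> comp_list [pdiag Icap, PTens M (bid 1), PTens PH bcup]"
    using comp_list_subst[of "[PTens PH (bid 2), pdiag Icup]" "[PTens PH bcup]" "[pdiag Icap, PTens M (bid 1)]" "[]"] H_Icup m by simp
  also have "\<dots> \<approx> comp_list [pdiag Icap, PTens M (bid 1), pdiag Icup, PH]"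
    using comp_list_subst[of "[PTens PH bcup]" "[pdiag Icup, PH]" "[pdiag Icap, PTens M (bid 1)]" "[]"] H_cup m by simp
  also have "\<dots> \<approx> PComp (ptrace M) PH"
    using comp_list_append[of "[pdiag Icap, PTens M (bid 1), pdiag Icup]" "[PH]"] m by simp
  finally show ?thesis .
qed

lemma ptrace_cong:
  assumes h: "M \<approx> M'" "psrc M = 2" "ptgt M = 2"
  shows "ptrace M \<approx> ptrace M'"
proof -
  have t: "pwf M" "pwf M'" "psrc M' = 2" "ptgt M' = 2" using h meq_wf meq_src meq_tgt by metis+
  show ?thesis
    using comp_list_subst[of "[PTens M (bid 1)]" "[PTens M' (bid 1)]" "[pdiag Icap]" "[pdiag Icup]"] meq_tens[OF h(1), of "bid 1"] t h
    by simp
qed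

lemma ptrace_add:
  assumes t: "pwf a" "pwf b" "psrc a = 2" "ptgt a = 2" "psrc b = 2" "ptgt b = 2"
  shows "ptrace (PAdd a b) \<approx> PAdd (ptrace a) (ptrace b)"
proof -
  have "ptrace (PAdd a b) \<approx> comp_list [pdiag Icap, PAdd (PTens a (bid 1)) (PTens b (bid 1)), pdiag Icup]"
    using comp_list_subst[of "[PTens (PAdd a b) (bid 1)]" "[PAdd (PTens a (bid 1)) (PTens b (bid 1))]" "[pdiag Icap]" "[pdiag Icup]"]
      meq_tens_add[of a b "bid 1"] t by simp
  also have "\<dots> \<approx> PAdd (ptrace a) (ptrace b)"
    using comp_list_add[of "[pdiag Icap]" "PTens a (bid 1)" "[pdiag Icup]" "PTens b (bid 1)"] t by simp
  finally show ?thesis .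
qed

lemma ptrace_smul:
  assumes t: "pwf a" "psrc a = 2" "ptgt a = 2"
  shows "ptrace (PSmul c a) \<approx> PSmul c (ptrace a)"
proof -
  have "ptrace (PSmul c a) \<approx> comp_list [pdiag Icap, PSmul c (PTens a (bid 1)), pdiag Icup]"
    using comp_list_subst[of "[PTens (PSmul c a) (bid 1)]" "[PSmul c (PTens a (bid 1))]" "[pdiag Icap]" "[pdiag Icup]"]
      meq_tens_smul[of a "bid 1" c] t by simp
  also have "\<dots> \<approx> PSmul c (ptrace a)"
    using comp_list_smul[of "[pdiag Icap]" "PTens a (bid 1)" "[pdiag Icup]" c] t by simp
  finally show ?thesis .
qed

lemma commutes_H_H: "commutes_H PH" by (simp add: commutes_H_def meq_refl)
lemma commutes_H_id: "commutes_H (idt 1)"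
proof -
  have "PComp (idt 1) PH \<approx> PH" by (rule meq_id_left) simp_all
  moreover have "PComp PH (idt 1) \<approx> PH" by (rule meq_id_right) simp_all
  ultimately show ?thesis by (simp add: commutes_H_def) (meson meq_sym meq_trans)
qed

lemma commutes_H_meq:
  assumes h: "c \<approx> c'" "commutes_H c"
  shows "commutes_H c'"
proof -
  have t: "pwf c'" "psrc c' = 1" "ptgt c' = 1" "pwf c" "psrc c = 1" "ptgt c = 1"
    using h meq_wf meq_src meq_tgt by (metis commutes_H_def)+
  have "PComp c' PH \<approx> PComp c PH" by (rule meq_compL, rule meq_sym, rule h(1)) (simp_all add: t)
  also have "\<dots> \<approx> PComp PH c" using h(2) by (simp add: commutes_H_def)
  also have "\<dots> \<approx> PComp PH c'" by (rule meq_compR[OF h(1)]) (simp_all add: t)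
  finally show ?thesis using t by (simp add: commutes_H_def)
qed

lemma commutes_H_smul:
  assumes h: "commutes_H c"
  shows "commutes_H (PSmul x c)"
proof -
  from h have t: "pwf c" "psrc c = 1" "ptgt c = 1" by (simp_all add: commutes_H_def)
  have "PComp (PSmul x c) PH \<approx> PSmul x (PComp c PH)" by (rule meq_comp_smul_l) (simp_all add: t)
  also have "\<dots> \<approx> PSmul x (PComp PH c)" by (rule meq_smul) (use h in \<open>simp add: commutes_H_def\<close>)
  also have "\<dots> \<approx> PComp PH (PSmul x c)" by (rule meq_sym, rule meq_comp_smul_r) (simp_all add: t)
  finally show ?thesis using t by (simp add: commutes_H_def)
qed

lemma commutes_H_add:
  assumes h: "commutes_H a" "commutes_H b"
  shows "commutes_H (PAdd a b)"
proof -
  from h have t: "pwf a" "psrc a = 1" "ptgt a = 1" "pwf b" "psrc b = 1" "ptgt b = 1" by (simp_all add: commutes_H_def)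
  have "PComp (PAdd a b) PH \<approx> PAdd (PComp a PH) (PComp b PH)" by (rule meq_comp_add_l) (simp_all add: t)
  also have "\<dots> \<approx> PAdd (PComp PH a) (PComp PH b)" by (rule meq_add) (use h t in \<open>simp_all add: commutes_H_def\<close>)
  also have "\<dots> \<approx> PComp PH (PAdd a b)" by (rule meq_sym, rule meq_comp_add_r) (simp_all add: t)
  finally show ?thesis using t by (simp add: commutes_H_def)
qed

lemma commutes_H_comp:
  assumes h: "commutes_H a" "commutes_H b"
  shows "commutes_H (PComp a b)"
proof -
  from h have t: "pwf a" "psrc a = 1" "ptgt a = 1" "pwf b" "psrc b = 1" "ptgt b = 1" by (simp_all add: commutes_H_def)
  have "PComp (PComp a b) PH \<approx> PComp a (PComp b PH)" by (rule meq_sym, rule meq_comp_assoc) (simp_all add: t)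
  also have "\<dots> \<approx> PComp a (PComp PH b)" by (rule meq_compR) (use h t in \<open>simp_all add: commutes_H_def\<close>)
  also have "\<dots> \<approx> PComp (PComp a PH) b" by (rule meq_comp_assoc) (simp_all add: t)
  also have "\<dots> \<approx> PComp (PComp PH a) b" by (rule meq_compL) (use h t in \<open>simp_all add: commutes_H_def\<close>)
  also have "\<dots> \<approx> PComp PH (PComp a b)" by (rule meq_sym, rule meq_comp_assoc) (simp_all add: t)
  finally show ?thesis using t by (simp add: commutes_H_def)
qed

lemma commutes_H_diff:
  assumes h: "commutes_H (PAdd a b)" "commutes_H b" "pwf a"
  shows "commutes_H a"
proof -
  from h have t: "psrc a = 1" "ptgt a = 1" "pwf b" "psrc b = 1" "ptgt b = 1" by (simp_all add: commutes_H_def)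
  have "PAdd (PAdd a b) (PSmul (-1) b) \<approx> PAdd a (PAdd b (PSmul (-1) b))"
    by (rule meq_add_assoc) (simp_all add: t h)
  also have "\<dots> \<approx> PAdd a (PZero 1 1)" by (rule meq_addR, rule meq_add_neg) (simp_all add: t h)
  also have "\<dots> \<approx> a" by (rule meq_add_zero) (simp_all add: t h)
  finally have "PAdd (PAdd a b) (PSmul (-1) b) \<approx> a" .
  moreover have "commutes_H (PAdd (PAdd a b) (PSmul (-1) b))" by (intro commutes_H_add commutes_H_smul h)
  ultimately show ?thesis by (rule commutes_H_meq)
qed

lemma ptrace_X0: "ptrace X0 \<approx> idt 1"
proof -
  have X0_tens: "PTens X0 (bid 1) \<approx> pdiag XI" unfolding X0_def by (rule meq_tens_btens) (simp_all add: named_bdiag_folds)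
  have Icap_XI: "PComp (pdiag Icap) (pdiag XI) \<approx> pdiag Gd" by (rule meq_diag_comp_loop_free) (simp_all add: bcomp_table bloops_table)
  have Gd_Icup: "PComp (pdiag Gd) (pdiag Icup) \<approx> pdiag (bid 1)" by (rule meq_diag_comp_loop_free) (simp_all add: bcomp_table bloops_table)
  have "ptrace X0 \<approx> comp_list [pdiag Icap, pdiag XI, pdiag Icup]"
    using comp_list_subst[of "[PTens X0 (bid 1)]" "[pdiag XI]" "[pdiag Icap]" "[pdiag Icup]"] X0_tens by simp
  also have "\<dots> \<approx> comp_list [pdiag Gd, pdiag Icup]"
    using comp_list_subst[of "[pdiag Icap, pdiag XI]" "[pdiag Gd]" "[]" "[pdiag Icup]"] Icap_XI by simp
  also have "\<dots> \<approx> idt 1" using Gd_Icup by (simp add: idt_def)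
  finally show ?thesis .
qed

lemma ptrace_cupcap: "ptrace (pdiag cupcap) \<approx> idt 1"
proof -
  have cupcap_tens: "PTens (pdiag cupcap) (bid 1) \<approx> pdiag cupcapI" by (rule meq_tens_btens) (simp_all add: named_bdiag_folds)
  have Icap_cupcapI: "PComp (pdiag Icap) (pdiag cupcapI) \<approx> pdiag capI" by (rule meq_diag_comp_loop_free) (simp_all add: bcomp_table bloops_table)
  have capI_Icup: "PComp (pdiag capI) (pdiag Icup) \<approx> pdiag (bid 1)" by (rule meq_diag_comp_loop_free) (simp_all add: bcomp_table bloops_table)
  have "ptrace (pdiag cupcap) \<approx> comp_list [pdiag Icap, pdiag cupcapI, pdiag Icup]"
    using comp_list_subst[of "[PTens (pdiag cupcap) (bid 1)]" "[pdiag cupcapI]" "[pdiag Icap]" "[pdiag Icup]"] cupcap_tens by simp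
  also have "\<dots> \<approx> comp_list [pdiag capI, pdiag Icup]"
    using comp_list_subst[of "[pdiag Icap, pdiag cupcapI]" "[pdiag capI]" "[]" "[pdiag Icup]"] Icap_cupcapI by simp
  also have "\<dots> \<approx> idt 1" using capI_Icup by (simp add: idt_def)
  finally show ?thesis .
qed

lemma ptrace_id: "ptrace (idt 2) \<approx> PSmul (dl ^ bloops Icap Icup) (idt 1)"
proof -
  have id_tens: "PTens (idt 2) (bid 1) \<approx> pdiag (bid 3)" unfolding idt_def by (rule meq_tens_btens) (simp_all add: btens_bid_bid)
  have Icap_id: "PComp (pdiag Icap) (pdiag (bid 3)) \<approx> pdiag Icap" by (rule meq_diag_comp_loop_free) (simp_all add: bcomp_bid_right)
  have Icap_Icup: "PComp (pdiag Icap) (pdiag Icup) \<approx> PSmul (dl ^ bloops Icap Icup) (pdiag (bid 1))" by (rule meq_rel_i0) (simp_all add: bcomp_table)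
  have "ptrace (idt 2) \<approx> comp_list [pdiag Icap, pdiag (bid 3), pdiag Icup]"
    using comp_list_subst[of "[PTens (idt 2) (bid 1)]" "[pdiag (bid 3)]" "[pdiag Icap]" "[pdiag Icup]"] id_tens by simp
  also have "\<dots> \<approx> comp_list [pdiag Icap, pdiag Icup]"
    using comp_list_subst[of "[pdiag Icap, pdiag (bid 3)]" "[pdiag Icap]" "[]" "[pdiag Icup]"] Icap_id by simp
  also have "\<dots> \<approx> PSmul (dl ^ bloops Icap Icup) (idt 1)" using Icap_Icup by (simp add: idt_def)
  finally show ?thesis .
qed

lemma commutes_H_ptrace_meq: "M \<approx> M' \<Longrightarrow> commutes_H (ptrace M) \<Longrightarrow> psrc M = 2 \<Longrightarrow> ptgt M = 2 \<Longrightarrow> commutes_H (ptrace M')"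
  by (rule commutes_H_meq, rule ptrace_cong)

lemma commutes_H_ptrace_add: "commutes_H (ptrace a) \<Longrightarrow> commutes_H (ptrace b) \<Longrightarrow> pwf a \<Longrightarrow> pwf b \<Longrightarrow> psrc a = 2 \<Longrightarrow> ptgt a = 2 \<Longrightarrow>
   psrc b = 2 \<Longrightarrow> ptgt b = 2 \<Longrightarrow> commutes_H (ptrace (PAdd a b))"
  by (rule commutes_H_meq, rule meq_sym, rule ptrace_add) (auto intro: commutes_H_add)

lemma commutes_H_ptrace_smul: "commutes_H (ptrace a) \<Longrightarrow> pwf a \<Longrightarrow> psrc a = 2 \<Longrightarrow> ptgt a = 2 \<Longrightarrow> commutes_H (ptrace (PSmul c a))"
  by (rule commutes_H_meq, rule meq_sym, rule ptrace_smul) (auto intro: commutes_H_smul)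

lemma commutes_H_ptrace_X0: "commutes_H (ptrace X0)" by (rule commutes_H_meq[OF meq_sym[OF ptrace_X0] commutes_H_id])
lemma commutes_H_ptrace_cupcap: "commutes_H (ptrace (pdiag cupcap))" by (rule commutes_H_meq[OF meq_sym[OF ptrace_cupcap] commutes_H_id])
lemma commutes_H_ptrace_id: "commutes_H (ptrace (idt 2))" by (rule commutes_H_meq[OF meq_sym[OF ptrace_id]], rule commutes_H_smul, rule commutes_H_id)

lemma commutes_H_ptrace_H01_left: "pwf M \<Longrightarrow> psrc M = 2 \<Longrightarrow> ptgt M = 2 \<Longrightarrow> commutes_H (ptrace M) \<Longrightarrow> commutes_H (ptrace (PComp H01 M))"
  by (rule commutes_H_meq, rule meq_sym, rule ptrace_H01_left) (auto intro: commutes_H_comp commutes_H_H)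
lemma commutes_H_ptrace_H01_right: "pwf M \<Longrightarrow> psrc M = 2 \<Longrightarrow> ptgt M = 2 \<Longrightarrow> commutes_H (ptrace M) \<Longrightarrow> commutes_H (ptrace (PComp M H01))"
  by (rule commutes_H_meq, rule meq_sym, rule ptrace_H01_right) (auto intro: commutes_H_comp commutes_H_H)

lemma meq_H02_cupcap: "PComp H02 (pdiag cupcap) \<approx> PSmul (-1) (PComp H01 (pdiag cupcap))"
proof -
  have "comp_list [H02, pdiag cupcap] \<approx> comp_list [H02, PAmalg, PPi]"
    using comp_list_subst[of "[pdiag cupcap]" "[PAmalg, PPi]" "[H02]" "[]"] meq_cupcap_Amalg_Pi by simp
  also have "\<dots> \<approx> comp_list [PSmul (-1) (PComp H01 PAmalg), PPi]"
    using comp_list_subst[of "[H02, PAmalg]" "[PSmul (-1) (PComp H01 PAmalg)]" "[]" "[PPi]"] meq_H02_Amalg by simp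
  also have "\<dots> \<approx> PSmul (-1) (comp_list [PComp H01 PAmalg, PPi])"
    using comp_list_smul[of "[]" "PComp H01 PAmalg" "[PPi]" "-1"] by simp
  also have "\<dots> \<approx> PSmul (-1) (comp_list [H01, PAmalg, PPi])"
    by (rule meq_smul) (use comp_list_subst[of "[PComp H01 PAmalg]" "[H01, PAmalg]" "[]" "[PPi]"] in \<open>simp add: meq_refl\<close>)
  also have "\<dots> \<approx> PSmul (-1) (comp_list [H01, pdiag cupcap])"
    by (rule meq_smul) (use comp_list_subst[of "[PAmalg, PPi]" "[pdiag cupcap]" "[H01]" "[]"] meq_cupcap_Amalg_Pi in \<open>simp add: meq_sym\<close>)
  finally show ?thesis by simp
qed

lemma meq_cupcap_H02: "PComp (pdiag cupcap) H02 \<approx> PSmul (-1) (PComp (pdiag cupcap) H01)"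
proof -
  have "comp_list [pdiag cupcap, H02] \<approx> comp_list [PAmalg, PPi, H02]"
    using comp_list_subst[of "[pdiag cupcap]" "[PAmalg, PPi]" "[]" "[H02]"] meq_cupcap_Amalg_Pi by simp
  also have "\<dots> \<approx> comp_list [PAmalg, PSmul (-1) (PComp PPi H01)]"
    using comp_list_subst[of "[PPi, H02]" "[PSmul (-1) (PComp PPi H01)]" "[PAmalg]" "[]"] meq_Pi_H02 by simp
  also have "\<dots> \<approx> PSmul (-1) (comp_list [PAmalg, PPi, H01])"
    using comp_list_smul[of "[PAmalg]" "PComp PPi H01" "[]" "-1"] by simp
  also have "\<dots> \<approx> PSmul (-1) (comp_list [pdiag cupcap, H01])"
    by (rule meq_smul) (use comp_list_subst[of "[PAmalg, PPi]" "[pdiag cupcap]" "[]" "[H01]"] meq_cupcap_Amalg_Pi in \<open>simp add: meq_sym\<close>)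
  finally show ?thesis by simp
qed

lemma commutes_H_ptrace_H02_H12: "commutes_H (ptrace (PComp H02 (H12 dl)))"
proof -
  have e: "PComp H02 (PAdd X0 negU) \<approx> PAdd (PComp H02 X0) (PComp H02 negU)"
    by (rule meq_comp_add_r) simp_all
  have a: "commutes_H (ptrace (PComp H02 X0))"
  proof -
    have "comp_list [X0, H01] \<approx> comp_list [X0, H01, idt 2]"
      using comp_list_subst[of "[H01]" "[H01, idt 2]" "[X0]" "[]"] meq_id_right[of H01 2] by (simp add: meq_sym)
    also have "\<dots> \<approx> comp_list [X0, H01, X0, X0]"
      using comp_list_subst[of "[idt 2]" "[X0, X0]" "[X0, H01]" "[]"] meq_X0_X0 by (simp add: meq_sym)
    also have "\<dots> \<approx> comp_list [H02, X0]"
      using comp_list_subst[of "[X0, H01, X0]" "[H02]" "[]" "[X0]"] by (simp add: H02_def meq_refl)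
    finally have f: "PComp X0 H01 \<approx> PComp H02 X0" by simp
    show ?thesis by (rule commutes_H_ptrace_meq[OF f], rule commutes_H_ptrace_H01_right) (use commutes_H_ptrace_X0 in simp_all)
  qed
  have b: "commutes_H (ptrace (PComp H02 negU))"
  proof -
    have "PSmul (-1) (PSmul 1 (PSmul (-1) (PComp H01 (pdiag cupcap)))) \<approx> PSmul (-1) (PSmul 1 (PComp H02 (pdiag cupcap)))"
      by (intro meq_smul meq_sym[OF meq_H02_cupcap])
    also have "\<dots> \<approx> PSmul (-1) (PComp H02 (PSmul 1 (pdiag cupcap)))"
      by (rule meq_smul, rule meq_sym, rule meq_comp_smul_r) simp_all
    also have "\<dots> \<approx> PComp H02 negU"
      by (rule meq_sym, rule meq_comp_smul_r) simp_all
    finally have f: "PSmul (-1) (PSmul 1 (PSmul (-1) (PComp H01 (pdiag cupcap)))) \<approx> PComp H02 negU" .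
    show ?thesis
      by (rule commutes_H_ptrace_meq[OF f]) ((intro commutes_H_ptrace_smul commutes_H_ptrace_H01_left commutes_H_ptrace_cupcap; simp), simp_all)
  qed
  have "commutes_H (ptrace (PAdd (PComp H02 X0) (PComp H02 negU)))" by (rule commutes_H_ptrace_add[OF a b]) simp_all
  then show ?thesis unfolding H12_eq by (rule commutes_H_ptrace_meq[OF meq_sym[OF e]]) simp_all
qed

lemma commutes_H_ptrace_H12_H02: "commutes_H (ptrace (PComp (H12 dl) H02))"
proof -
  have e: "PComp (PAdd X0 negU) H02 \<approx> PAdd (PComp X0 H02) (PComp negU H02)"
    by (rule meq_comp_add_l) simp_all
  have a: "commutes_H (ptrace (PComp X0 H02))"
  proof -
    have "comp_list [H01, X0] \<approx> comp_list [idt 2, H01, X0]"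
      using comp_list_subst[of "[H01]" "[idt 2, H01]" "[]" "[X0]"] meq_id_left[of H01 2] by (simp add: meq_sym)
    also have "\<dots> \<approx> comp_list [X0, X0, H01, X0]"
      using comp_list_subst[of "[idt 2]" "[X0, X0]" "[]" "[H01, X0]"] meq_X0_X0 by (simp add: meq_sym)
    also have "\<dots> \<approx> comp_list [X0, H02]"
      using comp_list_subst[of "[X0, H01, X0]" "[H02]" "[X0]" "[]"] by (simp add: H02_def meq_refl)
    finally have f: "PComp H01 X0 \<approx> PComp X0 H02" by simp
    show ?thesis by (rule commutes_H_ptrace_meq[OF f], rule commutes_H_ptrace_H01_left) (use commutes_H_ptrace_X0 in simp_all)
  qed
  have b: "commutes_H (ptrace (PComp negU H02))"
  proof -
    have "PSmul (-1) (PSmul 1 (PSmul (-1) (PComp (pdiag cupcap) H01))) \<approx> PSmul (-1) (PSmul 1 (PComp (pdiag cupcap) H02))"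
      by (intro meq_smul meq_sym[OF meq_cupcap_H02])
    also have "\<dots> \<approx> PComp negU H02" by (rule meq_sym, rule meq_comp_smul2_left) simp_all
    finally have f: "PSmul (-1) (PSmul 1 (PSmul (-1) (PComp (pdiag cupcap) H01))) \<approx> PComp negU H02" .
    show ?thesis
      by (rule commutes_H_ptrace_meq[OF f]) ((intro commutes_H_ptrace_smul commutes_H_ptrace_H01_right commutes_H_ptrace_cupcap; simp), simp_all)
  qed
  have "commutes_H (ptrace (PAdd (PComp X0 H02) (PComp negU H02)))" by (rule commutes_H_ptrace_add[OF a b]) simp_all
  then show ?thesis unfolding H12_eq by (rule commutes_H_ptrace_meq[OF meq_sym[OF e]]) simp_all
qed

lemma meq_cupcap_cupcap: "PComp (pdiag cupcap) (pdiag cupcap) \<approx> PSmul (dl ^ bloops bcap bcup) (pdiag cupcap)"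
proof -
  let ?c = "dl ^ bloops bcap bcup"
  have f: "PComp PPi PAmalg \<approx> PSmul ?c (idt 0)"
    unfolding PPi_def PAmalg_def idt_def by (rule meq_rel_i0) (simp_all add: bcomp_table)
  have "comp_list [pdiag cupcap, pdiag cupcap] \<approx> comp_list [PAmalg, PPi, pdiag cupcap]"
    using comp_list_subst[of "[pdiag cupcap]" "[PAmalg, PPi]" "[]" "[pdiag cupcap]"] meq_cupcap_Amalg_Pi by simp
  also have "\<dots> \<approx> comp_list [PAmalg, PPi, PAmalg, PPi]"
    using comp_list_subst[of "[pdiag cupcap]" "[PAmalg, PPi]" "[PAmalg, PPi]" "[]"] meq_cupcap_Amalg_Pi by simp
  also have "\<dots> \<approx> comp_list [PAmalg, PSmul ?c (idt 0), PPi]"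
    using comp_list_subst[of "[PPi, PAmalg]" "[PSmul ?c (idt 0)]" "[PAmalg]" "[PPi]"] f by simp
  also have "\<dots> \<approx> PSmul ?c (comp_list [PAmalg, idt 0, PPi])"
    using comp_list_smul[of "[PAmalg]" "idt 0" "[PPi]" ?c] by simp
  also have "\<dots> \<approx> PSmul ?c (comp_list [PAmalg, PPi])"
    by (rule meq_smul) (use comp_list_subst[of "[idt 0, PPi]" "[PPi]" "[PAmalg]" "[]"] meq_id_left[of PPi 0] in simp)
  also have "\<dots> \<approx> PSmul ?c (pdiag cupcap)"
    by (rule meq_smul) (use meq_cupcap_Amalg_Pi in \<open>simp add: meq_sym\<close>)
  finally show ?thesis by simp
qed

lemma meq_X0_cupcap: "PComp X0 (pdiag cupcap) \<approx> pdiag cupcap"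
proof -
  have "comp_list [X0, pdiag cupcap] \<approx> comp_list [X0, PAmalg, PPi]"
    using comp_list_subst[of "[pdiag cupcap]" "[PAmalg, PPi]" "[X0]" "[]"] meq_cupcap_Amalg_Pi by simp
  also have "\<dots> \<approx> comp_list [PAmalg, PPi]"
    using comp_list_subst[of "[X0, PAmalg]" "[PAmalg]" "[]" "[PPi]"] meq_X0_Amalg by simp
  also have "\<dots> \<approx> pdiag cupcap" using meq_cupcap_Amalg_Pi by (simp add: meq_sym)
  finally show ?thesis by simp
qed

lemma meq_cupcap_X0: "PComp (pdiag cupcap) X0 \<approx> pdiag cupcap"
proof -
  have "comp_list [pdiag cupcap, X0] \<approx> comp_list [PAmalg, PPi, X0]"
    using comp_list_subst[of "[pdiag cupcap]" "[PAmalg, PPi]" "[]" "[X0]"] meq_cupcap_Amalg_Pi by simp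
  also have "\<dots> \<approx> comp_list [PAmalg, PPi]"
    using comp_list_subst[of "[PPi, X0]" "[PPi]" "[PAmalg]" "[]"] meq_Pi_X0 by simp
  also have "\<dots> \<approx> pdiag cupcap" using meq_cupcap_Amalg_Pi by (simp add: meq_sym)
  finally show ?thesis by simp
qed

lemma commutes_H_ptrace_H12_H12: "commutes_H (ptrace (PComp (H12 dl) (H12 dl)))"
proof -
  have "PComp (PAdd X0 negU) (PAdd X0 negU) \<approx> PAdd (PComp X0 (PAdd X0 negU)) (PComp negU (PAdd X0 negU))"
    by (rule meq_comp_add_l) simp_all
  also have "\<dots> \<approx> PAdd (PAdd (PComp X0 X0) (PComp X0 negU)) (PAdd (PComp negU X0) (PComp negU negU))"
    by (rule meq_add; (rule meq_comp_add_r)?) simp_all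
  finally have expand: "PComp (PAdd X0 negU) (PAdd X0 negU)
      \<approx> PAdd (PAdd (PComp X0 X0) (PComp X0 negU)) (PAdd (PComp negU X0) (PComp negU negU))" .
  have "PSmul (-1) (PSmul 1 (pdiag cupcap)) \<approx> PSmul (-1) (PSmul 1 (PComp X0 (pdiag cupcap)))"
    by (intro meq_smul meq_sym[OF meq_X0_cupcap])
  also have "\<dots> \<approx> PComp X0 negU" by (rule meq_sym, rule meq_comp_smul2_right) simp_all
  finally have X0_NU: "commutes_H (ptrace (PComp X0 negU))"
    by (rule commutes_H_ptrace_meq) ((intro commutes_H_ptrace_smul commutes_H_ptrace_cupcap; simp), simp_all)
  have "PSmul (-1) (PSmul 1 (pdiag cupcap)) \<approx> PSmul (-1) (PSmul 1 (PComp (pdiag cupcap) X0))"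
    by (intro meq_smul meq_sym[OF meq_cupcap_X0])
  also have "\<dots> \<approx> PComp negU X0" by (rule meq_sym, rule meq_comp_smul2_left) simp_all
  finally have NU_X0: "commutes_H (ptrace (PComp negU X0))"
    by (rule commutes_H_ptrace_meq) ((intro commutes_H_ptrace_smul commutes_H_ptrace_cupcap; simp), simp_all)
  let ?c = "dl ^ bloops bcap bcup"
  have "PSmul (-1) (PSmul 1 (PSmul (-1) (PSmul 1 (PSmul ?c (pdiag cupcap)))))
      \<approx> PSmul (-1) (PSmul 1 (PSmul (-1) (PSmul 1 (PComp (pdiag cupcap) (pdiag cupcap)))))"
    by (intro meq_smul meq_sym[OF meq_cupcap_cupcap])
  also have "\<dots> \<approx> PSmul (-1) (PSmul 1 (PComp (pdiag cupcap) negU))"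
    by (intro meq_smul, rule meq_sym, rule meq_comp_smul2_right) simp_all
  also have "\<dots> \<approx> PComp negU negU" by (rule meq_sym, rule meq_comp_smul2_left) simp_all
  finally have NU_NU: "commutes_H (ptrace (PComp negU negU))"
    by (rule commutes_H_ptrace_meq) ((intro commutes_H_ptrace_smul commutes_H_ptrace_cupcap; simp), simp_all)
  have X0_X0: "commutes_H (ptrace (PComp X0 X0))"
    by (rule commutes_H_ptrace_meq[OF meq_sym[OF meq_X0_X0] commutes_H_ptrace_id]) simp_all
  have "commutes_H (ptrace (PAdd (PAdd (PComp X0 X0) (PComp X0 negU)) (PAdd (PComp negU X0) (PComp negU negU))))"
    by (intro commutes_H_ptrace_add X0_X0 X0_NU NU_X0 NU_NU) simp_all
  then show ?thesis unfolding H12_eq by (rule commutes_H_ptrace_meq[OF meq_sym[OF expand]]) simp_all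
qed

abbreviation "HII \<equiv> PTens PH (bid 2) :: 'k pterm"

lemma meq_H02_H02: "PComp H02 H02 \<approx> comp_list [X0, H01, H01, X0]"
proof -
  have "comp_list [H02, H02] \<approx> comp_list [X0, H01, X0, H02]"
    using comp_list_subst[of "[H02]" "[X0, H01, X0]" "[]" "[H02]"] by (simp add: H02_def meq_refl)
  also have "\<dots> \<approx> comp_list [X0, H01, X0, X0, H01, X0]"
    using comp_list_subst[of "[H02]" "[X0, H01, X0]" "[X0, H01, X0]" "[]"] by (simp add: H02_def meq_refl)
  also have "\<dots> \<approx> comp_list [X0, H01, idt 2, H01, X0]"
    using comp_list_subst[of "[X0, X0]" "[idt 2]" "[X0, H01]" "[H01, X0]"] meq_X0_X0 by simp
  also have "\<dots> \<approx> comp_list [X0, H01, H01, X0]"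
    using comp_list_subst[of "[H01, idt 2]" "[H01]" "[X0]" "[H01, X0]"] meq_id_right[of H01 2] by simp
  finally show ?thesis by simp
qed

lemma meq_IX_HII_commute: "PComp (pdiag IX) HII \<approx> PComp HII (pdiag IX)"
proof -
  have "PComp (pdiag IX) HII \<approx> PTens PH bX"
    by (rule meq_diag_comp_Htens[where B=bX]) (simp_all add: named_bdiag_folds)
  also have "\<dots> \<approx> PComp HII (pdiag IX)"
    by (rule meq_sym, rule meq_Htens_comp_diag[where A=bX]) (simp_all add: named_bdiag_folds)
  finally show ?thesis .
qed

lemma ptrace_H02_H02_meq: "ptrace (PComp H02 H02) \<approx> comp_list [pdiag capI, HII, HII, pdiag cupI]"
proof -
  have X0_tens: "PTens X0 (bid 1) \<approx> pdiag XI" unfolding X0_def by (rule meq_tens_btens) (simp_all add: named_bdiag_folds)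
  have Icap_XI: "PComp (pdiag Icap) (pdiag XI) \<approx> pdiag Gd" by (rule meq_diag_comp_loop_free) (simp_all add: bcomp_table bloops_table)
  have XI_Icup: "PComp (pdiag XI) (pdiag Icup) \<approx> pdiag Dd" by (rule meq_diag_comp_loop_free) (simp_all add: bcomp_table bloops_table)
  have Gd_split: "pdiag Gd \<approx> PComp (pdiag capI) (pdiag IX)" by (rule meq_sym, rule meq_diag_comp_loop_free) (simp_all add: bcomp_table bloops_table)
  have IX_Dd: "PComp (pdiag IX) (pdiag Dd) \<approx> pdiag cupI" by (rule meq_diag_comp_loop_free) (simp_all add: bcomp_table bloops_table)
  have "ptrace (PComp H02 H02) \<approx> ptrace (comp_list [X0, H01, H01, X0])" by (rule ptrace_cong[OF meq_H02_H02]) simp_all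
  also have "\<dots> \<approx> comp_list [pdiag Icap, PTens X0 (bid 1), PTens H01 (bid 1), PTens H01 (bid 1), PTens X0 (bid 1), pdiag Icup]"
    using comp_list_subst[of "[PTens (comp_list [X0, H01, H01, X0]) (bid 1)]" "[PTens X0 (bid 1), PTens H01 (bid 1), PTens H01 (bid 1), PTens X0 (bid 1)]" "[pdiag Icap]" "[pdiag Icup]"]
      comp_list_tens[of "[X0, H01, H01, X0]" 1] by simp
  also have "\<dots> \<approx> comp_list [pdiag Icap, pdiag XI, PTens H01 (bid 1), PTens H01 (bid 1), PTens X0 (bid 1), pdiag Icup]"
    using comp_list_subst[of "[PTens X0 (bid 1)]" "[pdiag XI]" "[pdiag Icap]" "[PTens H01 (bid 1), PTens H01 (bid 1), PTens X0 (bid 1), pdiag Icup]"] X0_tens by simp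
  also have "\<dots> \<approx> comp_list [pdiag Icap, pdiag XI, HII, PTens H01 (bid 1), PTens X0 (bid 1), pdiag Icup]"
    using comp_list_subst[of "[PTens H01 (bid 1)]" "[HII]" "[pdiag Icap, pdiag XI]" "[PTens H01 (bid 1), PTens X0 (bid 1), pdiag Icup]"] meq_H01_tens by simp
  also have "\<dots> \<approx> comp_list [pdiag Icap, pdiag XI, HII, HII, PTens X0 (bid 1), pdiag Icup]"
    using comp_list_subst[of "[PTens H01 (bid 1)]" "[HII]" "[pdiag Icap, pdiag XI, HII]" "[PTens X0 (bid 1), pdiag Icup]"] meq_H01_tens by simp
  also have "\<dots> \<approx> comp_list [pdiag Icap, pdiag XI, HII, HII, pdiag XI, pdiag Icup]"
    using comp_list_subst[of "[PTens X0 (bid 1)]" "[pdiag XI]" "[pdiag Icap, pdiag XI, HII, HII]" "[pdiag Icup]"] X0_tens by simp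
  also have "\<dots> \<approx> comp_list [pdiag Gd, HII, HII, pdiag XI, pdiag Icup]"
    using comp_list_subst[of "[pdiag Icap, pdiag XI]" "[pdiag Gd]" "[]" "[HII, HII, pdiag XI, pdiag Icup]"] Icap_XI by simp
  also have "\<dots> \<approx> comp_list [pdiag Gd, HII, HII, pdiag Dd]"
    using comp_list_subst[of "[pdiag XI, pdiag Icup]" "[pdiag Dd]" "[pdiag Gd, HII, HII]" "[]"] XI_Icup by simp
  also have "\<dots> \<approx> comp_list [pdiag capI, pdiag IX, HII, HII, pdiag Dd]"
    using comp_list_subst[of "[pdiag Gd]" "[pdiag capI, pdiag IX]" "[]" "[HII, HII, pdiag Dd]"] Gd_split by simp
  also have "\<dots> \<approx> comp_list [pdiag capI, HII, pdiag IX, HII, pdiag Dd]"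
    using comp_list_subst[of "[pdiag IX, HII]" "[HII, pdiag IX]" "[pdiag capI]" "[HII, pdiag Dd]"] meq_IX_HII_commute by simp
  also have "\<dots> \<approx> comp_list [pdiag capI, HII, HII, pdiag IX, pdiag Dd]"
    using comp_list_subst[of "[pdiag IX, HII]" "[HII, pdiag IX]" "[pdiag capI, HII]" "[pdiag Dd]"] meq_IX_HII_commute by simp
  also have "\<dots> \<approx> comp_list [pdiag capI, HII, HII, pdiag cupI]"
    using comp_list_subst[of "[pdiag IX, pdiag Dd]" "[pdiag cupI]" "[pdiag capI, HII, HII]" "[]"] IX_Dd by simp
  finally show ?thesis .
qed

lemma Zl_2_tens_meq: "PTens (Zl 2) (bid 1) \<approx> comp_list [pdiag capI, HII, HII, pdiag cupI]"
proof -
  have Pi_tens: "PTens PPi (bid 1) \<approx> pdiag capI" unfolding PPi_def by (rule meq_tens_btens) (simp_all add: named_bdiag_folds)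
  have Amalg_tens: "PTens PAmalg (bid 1) \<approx> pdiag cupI" unfolding PAmalg_def by (rule meq_tens_btens) (simp_all add: named_bdiag_folds)
  have "PTens (Zl 2) (bid 1) \<approx> PTens (comp_list [PPi, H01, H01, PAmalg]) (bid 1)"
    by (rule meq_tens[OF Zl_2_meq]) simp
  also have "\<dots> \<approx> comp_list [PTens PPi (bid 1), PTens H01 (bid 1), PTens H01 (bid 1), PTens PAmalg (bid 1)]"
    using comp_list_tens[of "[PPi, H01, H01, PAmalg]" 1] by simp
  also have "\<dots> \<approx> comp_list [pdiag capI, PTens H01 (bid 1), PTens H01 (bid 1), PTens PAmalg (bid 1)]"
    using comp_list_subst[of "[PTens PPi (bid 1)]" "[pdiag capI]" "[]" "[PTens H01 (bid 1), PTens H01 (bid 1), PTens PAmalg (bid 1)]"] Pi_tens by simp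
  also have "\<dots> \<approx> comp_list [pdiag capI, HII, PTens H01 (bid 1), PTens PAmalg (bid 1)]"
    using comp_list_subst[of "[PTens H01 (bid 1)]" "[HII]" "[pdiag capI]" "[PTens H01 (bid 1), PTens PAmalg (bid 1)]"] meq_H01_tens by simp
  also have "\<dots> \<approx> comp_list [pdiag capI, HII, HII, PTens PAmalg (bid 1)]"
    using comp_list_subst[of "[PTens H01 (bid 1)]" "[HII]" "[pdiag capI, HII]" "[PTens PAmalg (bid 1)]"] meq_H01_tens by simp
  also have "\<dots> \<approx> comp_list [pdiag capI, HII, HII, pdiag cupI]"
    using comp_list_subst[of "[PTens PAmalg (bid 1)]" "[pdiag cupI]" "[pdiag capI, HII, HII]" "[]"] Amalg_tens by simp
  finally show ?thesis .
qed

lemma ptrace_H02_H02: "ptrace (PComp H02 H02) \<approx> PTens (Zl 2) (bid 1)"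
  by (rule meq_trans[OF ptrace_H02_H02_meq meq_sym[OF Zl_2_tens_meq]])

lemma commutes_H_ptrace_Omega_Omega: "commutes_H (ptrace (PComp Omega Omega))"
proof -
  have F: "PComp H01 (PComp Omega Omega) \<approx> PComp Omega (PComp Omega H01)"
  proof -
    have "comp_list [H01, Omega, Omega] \<approx> comp_list [Omega, H01, Omega]"
      using comp_list_subst[of "[H01, Omega]" "[Omega, H01]" "[]" "[Omega]"] meq_H01_Omega_commute by simp
    also have "\<dots> \<approx> comp_list [Omega, Omega, H01]"
      using comp_list_subst[of "[H01, Omega]" "[Omega, H01]" "[Omega]" "[]"] meq_H01_Omega_commute by simp
    finally show ?thesis by simp
  qed
  have "PComp PH (ptrace (PComp Omega Omega)) \<approx> ptrace (PComp H01 (PComp Omega Omega))"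
    by (rule meq_sym, rule ptrace_H01_left) simp_all
  also have "\<dots> \<approx> ptrace (PComp Omega (PComp Omega H01))" by (rule ptrace_cong[OF F]) simp_all
  also have "\<dots> \<approx> ptrace (PComp (PComp Omega Omega) H01)" by (rule ptrace_cong, rule meq_comp_assoc) simp_all
  also have "\<dots> \<approx> PComp (ptrace (PComp Omega Omega)) PH" by (rule ptrace_H01_right) simp_all
  finally show ?thesis unfolding commutes_H_def by (simp add: meq_sym)
qed

lemma Zl_2_tens_commutes_H: "commutes_H (PTens (Zl 2) (bid 1))"
proof -
  let ?A = "PAdd (PComp H02 H02) (PComp H02 (H12 dl))"
  let ?B = "PAdd (PComp (H12 dl) H02) (PComp (H12 dl) (H12 dl))"
  have "PComp Omega Omega \<approx> PAdd (PComp H02 Omega) (PComp (H12 dl) Omega)" by (rule meq_comp_add_l) simp_all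
  also have "\<dots> \<approx> PAdd ?A ?B" by (rule meq_add; (rule meq_comp_add_r)?) simp_all
  finally have sum: "commutes_H (ptrace (PAdd ?A ?B))"
    by (rule commutes_H_ptrace_meq[OF _ commutes_H_ptrace_Omega_Omega]) simp_all
  have "commutes_H (PAdd (ptrace ?A) (ptrace ?B))" by (rule commutes_H_meq[OF ptrace_add sum]) simp_all
  moreover have "commutes_H (ptrace ?B)"
    by (rule commutes_H_ptrace_add[OF commutes_H_ptrace_H12_H02 commutes_H_ptrace_H12_H12]) simp_all
  ultimately have A: "commutes_H (ptrace ?A)" by (rule commutes_H_diff) simp
  have "commutes_H (PAdd (ptrace (PComp H02 H02)) (ptrace (PComp H02 (H12 dl))))"
    by (rule commutes_H_meq[OF ptrace_add A]) simp_all
  then have "commutes_H (ptrace (PComp H02 H02))" by (rule commutes_H_diff[OF _ commutes_H_ptrace_H02_H12]) simp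
  then show ?thesis by (rule commutes_H_meq[OF ptrace_H02_H02])
qed

lemma typing_Zl_2 [simp]: "pwf (Zl 2 :: 'k pterm)" "psrc (Zl 2 :: 'k pterm) = 0" "ptgt (Zl 2 :: 'k pterm) = 0"
  by (simp_all add: Zl_def hpow_2 PPi_def PAmalg_def)

section \<open>Central endomorphisms of the object 0\<close>

lemma central_PId0:
  assumes z: "pwf z" "psrc z = 0" "ptgt z = 0"
  shows "PComp (PTens z (bid 0)) PId0 \<approx> PComp PId0 (PTens z (bid 0))"
proof -
  have "PComp (PTens z (bid 0)) PId0 \<approx> PComp z PId0"
    by (rule meq_compL, rule meq_tens_unit) (simp_all add: z)
  also have "\<dots> \<approx> PComp z (idt 0)"
    unfolding idt_def by (rule meq_compR, rule meq_sym, rule meq_tens_unit) (simp_all add: z)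
  also have "\<dots> \<approx> z" by (rule meq_id_right) (simp_all add: z)
  also have "\<dots> \<approx> PComp (idt 0) z" by (rule meq_sym, rule meq_id_left) (simp_all add: z)
  also have "\<dots> \<approx> PComp PId0 z"
    unfolding idt_def by (rule meq_compL, rule meq_tens_unit) (simp_all add: z)
  also have "\<dots> \<approx> PComp PId0 (PTens z (bid 0))"
    by (rule meq_compR, rule meq_sym, rule meq_tens_unit) (simp_all add: z)
  finally show ?thesis by simp
qed

lemma central_PTens:
  assumes z: "pwf z" "psrc z = 0" "ptgt z = 0" and w: "pwf t" "is_bdiag d"
    and it: "PComp (PTens z (bid (ptgt t))) t \<approx> PComp t (PTens z (bid (psrc t)))"
  shows "PComp (PTens z (bid (ptgt t + bt d))) (PTens t d) \<approx> PComp (PTens t d) (PTens z (bid (psrc t + bs d)))"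
proof -
  have "PComp (PTens z (bid (ptgt t + bt d))) (PTens t d)
      \<approx> PComp (PTens (PTens z (bid (ptgt t))) (bid (bt d))) (PTens t d)"
    by (rule meq_compL, rule meq_sym, rule meq_tens_btens) (simp_all add: z w btens_bid_bid)
  also have "\<dots> \<approx> PSmul (dl ^ bloops (bid (bt d)) d) (PTens (PComp (PTens z (bid (ptgt t))) t) d)"
    by (rule meq_interchange) (simp_all add: z w bcomp_bid_left)
  also have "\<dots> \<approx> PTens (PComp (PTens z (bid (ptgt t))) t) d"
    using z w by (simp add: bcomp_bid_left meq_smul_one)
  also have "\<dots> \<approx> PTens (PComp t (PTens z (bid (psrc t)))) d"
    by (rule meq_tens[OF it w(2)])
  also have "\<dots> \<approx> PSmul (dl ^ bloops d (bid (bs d))) (PTens (PComp t (PTens z (bid (psrc t)))) d)"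
    using z w by (simp add: bcomp_bid_right meq_smul_one meq_sym)
  also have "\<dots> \<approx> PComp (PTens t d) (PTens (PTens z (bid (psrc t))) (bid (bs d)))"
    by (rule meq_sym, rule meq_interchange) (simp_all add: z w bcomp_bid_right)
  also have "\<dots> \<approx> PComp (PTens t d) (PTens z (bid (psrc t + bs d)))"
    by (rule meq_compR, rule meq_tens_btens) (simp_all add: z w btens_bid_bid)
  finally show ?thesis .
qed

lemma central_PComp:
  assumes z: "pwf z" "psrc z = 0" "ptgt z = 0" and w: "pwf a" "pwf b" "ptgt a = psrc b"
    and ia: "PComp (PTens z (bid (ptgt a))) a \<approx> PComp a (PTens z (bid (psrc a)))"
    and ib: "PComp (PTens z (bid (ptgt b))) b \<approx> PComp b (PTens z (bid (psrc b)))"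
  shows "PComp (PTens z (bid (ptgt b))) (PComp b a) \<approx> PComp (PComp b a) (PTens z (bid (psrc a)))"
proof -
  have "PComp (PTens z (bid (ptgt b))) (PComp b a) \<approx> PComp (PComp (PTens z (bid (ptgt b))) b) a"
    by (rule meq_comp_assoc) (simp_all add: z w)
  also have "\<dots> \<approx> PComp (PComp b (PTens z (bid (psrc b)))) a"
    by (rule meq_compL[OF ib]) (simp_all add: z w)
  also have "\<dots> \<approx> PComp b (PComp (PTens z (bid (psrc b))) a)"
    by (rule meq_sym, rule meq_comp_assoc) (simp_all add: z w)
  also have "\<dots> \<approx> PComp b (PComp a (PTens z (bid (psrc a))))"
    by (rule meq_compR) (use ia z w in simp_all)
  also have "\<dots> \<approx> PComp (PComp b a) (PTens z (bid (psrc a)))"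
    by (rule meq_comp_assoc) (simp_all add: z w)
  finally show ?thesis .
qed

lemma central_PAdd:
  assumes z: "pwf z" "psrc z = 0" "ptgt z = 0"
    and w: "pwf a" "pwf b" "psrc a = psrc b" "ptgt a = ptgt b"
    and ia: "PComp (PTens z (bid (ptgt a))) a \<approx> PComp a (PTens z (bid (psrc a)))"
    and ib: "PComp (PTens z (bid (ptgt a))) b \<approx> PComp b (PTens z (bid (psrc a)))"
  shows "PComp (PTens z (bid (ptgt a))) (PAdd a b) \<approx> PComp (PAdd a b) (PTens z (bid (psrc a)))"
proof -
  have "PComp (PTens z (bid (ptgt a))) (PAdd a b)
     \<approx> PAdd (PComp (PTens z (bid (ptgt a))) a) (PComp (PTens z (bid (ptgt a))) b)"
    by (rule meq_comp_add_r) (simp_all add: z w)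
  also have "\<dots> \<approx> PAdd (PComp a (PTens z (bid (psrc a)))) (PComp b (PTens z (bid (psrc a))))"
    by (rule meq_add[OF ia ib]) (simp_all add: z w)
  also have "\<dots> \<approx> PComp (PAdd a b) (PTens z (bid (psrc a)))"
    by (rule meq_sym, rule meq_comp_add_l) (simp_all add: z w)
  finally show ?thesis .
qed

lemma central_if_commutes_H:
  assumes z: "pwf z" "psrc z = 0" "ptgt z = 0" and zH: "commutes_H (PTens z (bid 1))"
  shows "pwf A \<Longrightarrow> PComp (PTens z (bid (ptgt A))) A \<approx> PComp A (PTens z (bid (psrc A)))"
proof (induction A)
  case PId0
  show ?case using central_PId0[OF z] by simp
next
  case PH
  show ?case using zH by (simp add: commutes_H_def meq_sym)
next
  case (PComp b a)
  then show ?case using central_PComp[OF z] by simp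
next
  case (PTens t d)
  then show ?case using central_PTens[OF z] by simp
next
  case (PZero r s)
  have "PComp (PTens z (bid s)) (PZero r s) \<approx> PZero r s"
    using meq_comp_PZero_right[of "PTens z (bid s)" s r] z by simp
  also have "\<dots> \<approx> PComp (PZero r s) (PTens z (bid r))"
    using meq_comp_PZero_left[of "PTens z (bid r)" r s] z by (simp add: meq_sym)
  finally show ?case by simp
next
  case (PAdd a b)
  then show ?case using central_PAdd[OF z] by simp
next
  case (PSmul c a)
  have w: "pwf a" using PSmul.prems by auto
  have ia: "PComp (PTens z (bid (ptgt a))) a \<approx> PComp a (PTens z (bid (psrc a)))" using PSmul.IH w by simp
  have "PComp (PTens z (bid (ptgt a))) (PSmul c a) \<approx> PSmul c (PComp (PTens z (bid (ptgt a))) a)"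
    by (rule meq_comp_smul_r) (simp_all add: z w)
  also have "\<dots> \<approx> PSmul c (PComp a (PTens z (bid (psrc a))))" by (rule meq_smul[OF ia])
  also have "\<dots> \<approx> PComp (PSmul c a) (PTens z (bid (psrc a)))"
    by (rule meq_sym, rule meq_comp_smul_l) (simp_all add: z w)
  finally show ?case by simp
qed

end

theorem lemma2p15:
  fixes delta :: "'k::comm_ring_1"
  shows "((\<exists>u::'k. 2 * u = 1) \<longrightarrow>
            peq delta (Zl 1) (PZero 0 0) \<and>
            peq delta (PSmul 2 (Zl 3)) (PSmul (2 - delta) (Zl 2)))
       \<and> peq delta (PComp (PTens (Zl 2) (bid 1)) PH) (PComp PH (PTens (Zl 2) (bid 1)))
       \<and> (\<forall>(A::'k pterm) r s. ptyp A r s \<longrightarrow>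
            peq delta (PComp (PTens (Zl 2) (bid s)) A) (PComp A (PTens (Zl 2) (bid r))))"
proof (intro conjI impI allI)
  assume "\<exists>u::'k. 2 * u = 1"
  then show "peq delta (Zl 1) (PZero 0 0)" "peq delta (PSmul 2 (Zl 3)) (PSmul (2 - delta) (Zl 2))"
    by (blast intro: peq_if_meq Zl_1_zero Zl_3_Zl_2)+
next
  show "peq delta (PComp (PTens (Zl 2) (bid 1)) PH) (PComp PH (PTens (Zl 2) (bid 1)))"
    using Zl_2_tens_commutes_H[of delta] by (simp add: commutes_H_def peq_if_meq)
next
  fix A :: "'k pterm" and r s
  assume "ptyp A r s"
  then show "peq delta (PComp (PTens (Zl 2) (bid s)) A) (PComp A (PTens (Zl 2) (bid r)))"
    using central_if_commutes_H[OF typing_Zl_2 Zl_2_tens_commutes_H, of A delta]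
    by (auto simp: ptyp_def intro: peq_if_meq)
qed

end
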